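(* Let $P$ be a natural unit interval order on $[n]$ and $G=\mathrm{inc}(P)$. If for some $r$ the induced subgraphs of $G$ on $\{1,2,\dots,r\}$ and on $\{r+1,r+2,\dots,n\}$ are complete graphs, then $X_G(\mathbf{x},t)$ is $e$-positive.
   Context: A natural unit interval order $P(m_1,\dots,m_{n-1})$ is defined for integers $m_1\le\cdots\le m_{n-1}\le n$ with $m_i\ge i$: it is the poset on $[n]$ with $i<_P j$ iff $i<n$ and $j\in\{m_i+1,\dots,n\}$. Its incomparability graph $\mathrm{inc}(P)$ has vertex set $[n]$ and an edge $\{i,j\}$ ($i<j$) iff $j\le m_i$. The chromatic quasisymmetric function of a graph $G$ on $V\subset\mathbb{P}$ is $X_G(\mathbf{x},t)=\sum_\kappa t^{\mathrm{asc}(\kappa)}\prod_v x_{\kappa(v)}$ over proper colorings $\kappa:V\to\mathbb{P}$, with $\mathrm{asc}(\kappa)$ the number of edges $\{i,j\}$, $i<j$, with $\kappa(i)<\kappa(j)$. $X_G(\mathbf{x},t)$ is $e$-positive if, writing $X_G(\mathbf{x},t)=\sum_{\lambda\vdash n}C_\lambda(t)e_\lambda$ in the elementary symmetric function basis, every $C_\lambda(t)$ is a polynomial in $t$ with nonnegative coefficients. *)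

theory Defs
  imports Main "HOL-Library.Multiset" "HOL-Library.FuncSet"
    "HOL-Computational_Algebra.Polynomial"
begin

text \<open>Formal power series in the commuting variables x_1, x_2, ... (indexed by
positive integers) with coefficients in Z[t]: a series is given by its coefficient
function on monomials; a monomial x^alpha is represented by the multiset alpha of
variable indices (with multiplicity = exponent).\<close>

type_synonym qsf = "nat multiset \<Rightarrow> int poly"

text \<open>Natural unit interval order data: m_1 \<le> ... \<le> m_{n-1} \<le> n with m_i \<ge> i.\<close>
definition nuio :: "nat \<Rightarrow> (nat \<Rightarrow> nat) \<Rightarrow> bool" where
  "nuio n m \<longleftrightarrow>
     (\<forall>i. 1 \<le> i \<and> i \<le> n - 1 \<longrightarrow> i \<le> m i \<and> m i \<le> n) \<and>
     (\<forall>i. 1 \<le> i \<and> i + 1 \<le> n - 1 \<longrightarrow> m i \<le> m (i + 1))"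

text \<open>Adjacency of the incomparability graph inc(P(m_1,...,m_{n-1})) on [n]:
{i,j} with i<j is an edge iff j \<le> m_i.\<close>
definition inc_adj :: "(nat \<Rightarrow> nat) \<Rightarrow> nat \<Rightarrow> nat \<Rightarrow> bool" where
  "inc_adj m i j \<longleftrightarrow> (i < j \<and> j \<le> m i) \<or> (j < i \<and> i \<le> m j)"

definition proper_coloring :: "nat set \<Rightarrow> (nat \<Rightarrow> nat \<Rightarrow> bool) \<Rightarrow> (nat \<Rightarrow> nat) \<Rightarrow> bool" where
  "proper_coloring V E \<kappa> \<longleftrightarrow>
     (\<forall>v\<in>V. 0 < \<kappa> v) \<and> (\<forall>i\<in>V. \<forall>j\<in>V. E i j \<longrightarrow> \<kappa> i \<noteq> \<kappa> j)"

definition asc :: "nat set \<Rightarrow> (nat \<Rightarrow> nat \<Rightarrow> bool) \<Rightarrow> (nat \<Rightarrow> nat) \<Rightarrow> nat" where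
  "asc V E \<kappa> = card {(i, j). i \<in> V \<and> j \<in> V \<and> i < j \<and> E i j \<and> \<kappa> i < \<kappa> j}"

text \<open>Chromatic quasisymmetric function X_G(x,t): the coefficient of the monomial
x^alpha is the sum of t^asc(kappa) over proper colourings kappa whose monomial
prod_v x_{kappa(v)} equals x^alpha (colourings taken extensionally on V).\<close>
definition chrom_qsf :: "nat set \<Rightarrow> (nat \<Rightarrow> nat \<Rightarrow> bool) \<Rightarrow> qsf" where
  "chrom_qsf V E \<alpha> =
     (\<Sum>\<kappa> \<in> {\<kappa> \<in> V \<rightarrow>\<^sub>E set_mset \<alpha>. proper_coloring V E \<kappa> \<and>
                    image_mset \<kappa> (mset_set V) = \<alpha>}.
        monom 1 (asc V E \<kappa>))"

definition qsf_mult :: "qsf \<Rightarrow> qsf \<Rightarrow> qsf" where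
  "qsf_mult f g \<alpha> = (\<Sum>\<beta> \<in> {\<beta>. \<beta> \<subseteq># \<alpha>}. f \<beta> * g (\<alpha> - \<beta>))"

definition qsf_one :: qsf where
  "qsf_one \<alpha> = (if \<alpha> = {#} then 1 else 0)"

definition elem_sym :: "nat \<Rightarrow> qsf" where
  "elem_sym k \<alpha> = (if size \<alpha> = k \<and> (\<forall>x. count \<alpha> x \<le> 1) \<and> 0 \<notin># \<alpha> then 1 else 0)"

definition elem_sym_part :: "nat list \<Rightarrow> qsf" where
  "elem_sym_part lam = foldr (\<lambda>k f. qsf_mult (elem_sym k) f) lam qsf_one"

definition partitions :: "nat \<Rightarrow> nat list set" where
  "partitions n = {lam. sum_list lam = n \<and> 0 \<notin> set lam \<and> sorted_wrt (\<ge>) lam}"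

definition e_positive :: "nat \<Rightarrow> qsf \<Rightarrow> bool" where
  "e_positive n X \<longleftrightarrow>
     (\<exists>C :: nat list \<Rightarrow> int poly.
        (\<forall>lam \<in> partitions n. \<forall>i. 0 \<le> coeff (C lam) i) \<and>
        X = (\<lambda>\<alpha>. \<Sum>lam \<in> partitions n. C lam * elem_sym_part lam \<alpha>))"

end

theory Submission
  imports Defs
begin

(* A unit interval graph whose natural vertex order admits no independent triple (for instance
   two cliques joined by unit interval edges) has X_G = sum_k c_k(t) e_(n-k,k) with explicit
   c_k in N[t]. The proof is by induction on the color multiset: the vertices of the largest
   color form an independent set of size one or two, and deleting them costs a factor t^d,
   with d the number of edges entering them from smaller vertices. The coefficients of e_a e_b obey the
   matching recursion, so it suffices that the c_k, defined by deleting non-edges (c_0 being a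
   weighted count of suitable vertex orderings), satisfy
     sum_v t^(lower degree of v) c_k(G - v) = c_k(G) + c_(k+1)(G)   (up to boundary terms).
   This deletion identity follows by induction on k from an involution on the triples
   (vertex, non-edge) that matches the two orders of deleting them. *)

section \<open>Products of two elementary symmetric functions\<close>

definition elem_sym_prod :: "nat \<Rightarrow> nat \<Rightarrow> qsf" where
  "elem_sym_prod a b = qsf_mult (elem_sym a) (elem_sym b)"

lemma finite_submultisets: "finite {\<beta>. \<beta> \<subseteq># A}"
proof (rule finite_subset)
  show "{\<beta>. \<beta> \<subseteq># A} \<subseteq> (\<Union>k\<le>size A. multisets_of_size (set_mset A) k)"
    by (auto simp: multisets_of_size_def size_mset_mono dest: mset_subset_eqD)
qed auto

lemma sum_submultisets_replicate_add:
  assumes "c \<notin># A"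
  shows "(\<Sum>\<beta> | \<beta> \<subseteq># replicate_mset j c + A. f \<beta>) =
    (\<Sum>i\<le>j. \<Sum>\<beta> | \<beta> \<subseteq># A. f (replicate_mset i c + \<beta>))"
proof -
  have "(\<Sum>i\<le>j. \<Sum>\<beta> | \<beta> \<subseteq># A. f (replicate_mset i c + \<beta>)) =
     (\<Sum>(i, \<beta>) \<in> {..j} \<times> {\<beta>. \<beta> \<subseteq># A}. f (replicate_mset i c + \<beta>))"
    by (simp add: sum.cartesian_product finite_submultisets)
  also have "\<dots> = (\<Sum>\<beta> | \<beta> \<subseteq># replicate_mset j c + A. f \<beta>)"
  proof (rule sum.reindex_bij_witness[where i = "\<lambda>\<beta>. (count \<beta> c, filter_mset (\<lambda>x. x \<noteq> c) \<beta>)"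
        and j = "\<lambda>(i, \<beta>). replicate_mset i c + \<beta>"])
    fix p assume p: "p \<in> {..j} \<times> {\<beta>. \<beta> \<subseteq># A}"
    then have "c \<notin># snd p" using assms by (auto dest: mset_subset_eqD)
    then show "(\<lambda>\<beta>. (count \<beta> c, filter_mset (\<lambda>x. x \<noteq> c) \<beta>)) ((\<lambda>(i, \<beta>). replicate_mset i c + \<beta>) p) = p"
      by (auto simp: not_in_iff split: prod.split intro!: multiset_eqI)
    show "(\<lambda>(i, \<beta>). replicate_mset i c + \<beta>) p \<in> {\<beta>. \<beta> \<subseteq># replicate_mset j c + A}"
      using p by (auto simp: subseteq_mset_def add_mono)
  next
    fix \<beta> assume \<beta>: "\<beta> \<in> {\<beta>. \<beta> \<subseteq># replicate_mset j c + A}"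
    show "(\<lambda>(i, \<beta>). replicate_mset i c + \<beta>) (count \<beta> c, filter_mset (\<lambda>x. x \<noteq> c) \<beta>) = \<beta>"
      by (auto intro!: multiset_eqI)
    have "count \<beta> c \<le> j"
      using \<beta> assms by (auto simp: subseteq_mset_def not_in_iff dest: spec[of _ c])
    moreover have "count (filter_mset (\<lambda>x. x \<noteq> c) \<beta>) x \<le> count A x" for x
      using \<beta> by (cases "x = c") (auto simp: subseteq_mset_def dest: spec[of _ x])
    ultimately show "(count \<beta> c, filter_mset (\<lambda>x. x \<noteq> c) \<beta>) \<in> {..j} \<times> {\<beta>. \<beta> \<subseteq># A}"
      by (auto simp: subseteq_mset_def)
  qed (auto simp: split_def)
  finally show ?thesis ..
qed

lemma elem_sym_replicate_add:
  assumes "c \<notin># \<beta>" "c \<noteq> 0"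
  shows "elem_sym a (replicate_mset i c + \<beta>) = (if i \<le> 1 \<and> i \<le> a then elem_sym (a - i) \<beta> else 0)"
proof (cases "i \<le> 1")
  case True
  have count_iff: "(\<forall>x. count (replicate_mset i c + \<beta>) x \<le> 1) \<longleftrightarrow> (\<forall>x. count \<beta> x \<le> 1)"
  proof (intro iffI allI)
    fix x assume "\<forall>x. count (replicate_mset i c + \<beta>) x \<le> 1"
    then show "count \<beta> x \<le> 1"
      by (metis count_union le_add2 order.trans)
  next
    fix x assume "\<forall>x. count \<beta> x \<le> 1"
    then show "count (replicate_mset i c + \<beta>) x \<le> 1"
      using True assms(1) by (cases "x = c") (simp_all add: not_in_iff)
  qed
  moreover have "0 \<in># replicate_mset i c + \<beta> \<longleftrightarrow> 0 \<in># \<beta>"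
    using assms(2) by simp
  moreover have "i + size \<beta> = a \<longleftrightarrow> i \<le> a \<and> size \<beta> = a - i"
    by linarith
  ultimately show ?thesis
    using True by (simp add: elem_sym_def)
next
  case False
  then have "\<not> count (replicate_mset i c + \<beta>) c \<le> 1"
    by simp
  then have "elem_sym a (replicate_mset i c + \<beta>) = 0"
    unfolding elem_sym_def by (intro if_not_P) blast
  with False show ?thesis
    by simp
qed

lemma replicate_add_minus:
  assumes "\<beta> \<subseteq># A" "i \<le> j"
  shows "(replicate_mset j c + A) - (replicate_mset i c + \<beta>) = replicate_mset (j - i) c + (A - \<beta>)"
  using assms by (auto simp: subseteq_mset_def intro!: multiset_eqI)

lemma elem_sym_prod_replicate_add:
  assumes "c \<notin># A" "c \<noteq> 0"
  shows "elem_sym_prod a b (replicate_mset j c + A) =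
    (\<Sum>i\<le>j. if i \<le> 1 \<and> j - i \<le> 1 \<and> i \<le> a \<and> j - i \<le> b
             then elem_sym_prod (a - i) (b - (j - i)) A else 0)"
  unfolding elem_sym_prod_def qsf_mult_def sum_submultisets_replicate_add[OF assms(1)]
proof (rule sum.cong[OF refl])
  fix i assume "i \<in> {..j}"
  then have "i \<le> j" by simp
  have "elem_sym a (replicate_mset i c + \<beta>) * elem_sym b (replicate_mset j c + A - (replicate_mset i c + \<beta>))
      = (if i \<le> 1 \<and> j - i \<le> 1 \<and> i \<le> a \<and> j - i \<le> b then elem_sym (a - i) \<beta> * elem_sym (b - (j - i)) (A - \<beta>) else 0)"
    if "\<beta> \<subseteq># A" for \<beta>
  proof -
    have "c \<notin># \<beta>" "c \<notin># A - \<beta>"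
      using assms(1) that by (auto dest: mset_subset_eqD in_diffD)
    then show ?thesis
      unfolding replicate_add_minus[OF that \<open>i \<le> j\<close>]
      using assms(2) by (simp add: elem_sym_replicate_add)
  qed
  then show "(\<Sum>\<beta> | \<beta> \<subseteq># A. elem_sym a (replicate_mset i c + \<beta>) * elem_sym b (replicate_mset j c + A - (replicate_mset i c + \<beta>)))
      = (if i \<le> 1 \<and> j - i \<le> 1 \<and> i \<le> a \<and> j - i \<le> b then \<Sum>\<beta> | \<beta> \<subseteq># A. elem_sym (a - i) \<beta> * elem_sym (b - (j - i)) (A - \<beta>) else 0)"
    by (cases "i \<le> 1 \<and> j - i \<le> 1 \<and> i \<le> a \<and> j - i \<le> b")
      (auto intro!: sum.neutral)
qed

lemma elem_sym_prod_replicate_ge3: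
  assumes "c \<notin># A" "c \<noteq> 0" "3 \<le> j"
  shows "elem_sym_prod a b (replicate_mset j c + A) = 0"
  using assms(3) unfolding elem_sym_prod_replicate_add[OF assms(1,2)] by (intro sum.neutral) auto

lemma elem_sym_prod_commute: "elem_sym_prod a b \<alpha> = elem_sym_prod b a \<alpha>"
  unfolding elem_sym_prod_def qsf_mult_def
  by (rule sum.reindex_bij_witness[where i = "\<lambda>\<beta>. \<alpha> - \<beta>" and j = "\<lambda>\<beta>. \<alpha> - \<beta>"])
    (auto simp: subset_mset.diff_diff_right mult.commute)

lemma elem_sym_prod_size_neq: "size \<alpha> \<noteq> a + b \<Longrightarrow> elem_sym_prod a b \<alpha> = 0"
  unfolding elem_sym_prod_def qsf_mult_def
proof (rule sum.neutral, rule ballI)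
  fix \<beta> assume "size \<alpha> \<noteq> a + b" "\<beta> \<in> {\<beta>. \<beta> \<subseteq># \<alpha>}"
  moreover from this have "size \<alpha> = size \<beta> + size (\<alpha> - \<beta>)"
    by (simp add: size_Diff_submset size_mset_mono)
  ultimately show "elem_sym a \<beta> * elem_sym b (\<alpha> - \<beta>) = 0"
    by (auto simp: elem_sym_def)
qed

lemma elem_sym_prod_zero_color: "0 \<in># \<alpha> \<Longrightarrow> elem_sym_prod a b \<alpha> = 0"
  unfolding elem_sym_prod_def qsf_mult_def
proof (rule sum.neutral, rule ballI)
  fix \<beta> assume "0 \<in># \<alpha>" "\<beta> \<in> {\<beta>. \<beta> \<subseteq># \<alpha>}"
  then have "0 \<in># \<beta> \<or> 0 \<in># \<alpha> - \<beta>"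
    by (metis mem_Collect_eq subset_mset.add_diff_inverse union_iff)
  then show "elem_sym a \<beta> * elem_sym b (\<alpha> - \<beta>) = 0"
    by (auto simp: elem_sym_def)
qed

lemma elem_sym_prod_empty: "elem_sym_prod 0 0 {#} = 1"
  by (simp add: elem_sym_prod_def qsf_mult_def elem_sym_def)

lemma sum_elem_sym_prod_add_top:
  fixes C :: "nat \<Rightarrow> int poly"
  assumes "c \<notin># A" "c \<noteq> 0"
  shows "(\<Sum>k\<le>Suc M. C k * elem_sym_prod (Suc M - k) k (add_mset c A)) =
    (\<Sum>j\<le>M. (C j + C (Suc j) + (if Suc M = 2 * j + 2 then C (Suc j) else 0)
                - (if Suc M = 2 * j then C j else 0)) * elem_sym_prod (M - j) j A)"
proof -
  define g where "g j = elem_sym_prod (M - j) j A" for j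
  have top: "elem_sym_prod (Suc M - k) k (add_mset c A) =
      (if 1 \<le> k then elem_sym_prod (Suc M - k) (k - 1) A else 0)
      + (if k \<le> M then elem_sym_prod (M - k) k A else 0)" for k
    using elem_sym_prod_replicate_add[OF assms, of "Suc M - k" k 1]
    by (cases "k \<le> M") (auto simp: Suc_diff_le)
  have "(\<Sum>k\<le>Suc M. C k * elem_sym_prod (Suc M - k) k (add_mset c A))
      = (\<Sum>k\<le>Suc M. C k * (if 1 \<le> k then elem_sym_prod (Suc M - k) (k - 1) A else 0))
        + (\<Sum>k\<le>Suc M. C k * (if k \<le> M then g k else 0))"
    by (simp add: top distrib_left sum.distrib g_def)
  also have "(\<Sum>k\<le>Suc M. C k * (if 1 \<le> k then elem_sym_prod (Suc M - k) (k - 1) A else 0))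
      = (\<Sum>j\<le>M. C (Suc j) * g j)"
    by (subst sum.atMost_Suc_shift) (simp add: g_def)
  also have "(\<Sum>k\<le>Suc M. C k * (if k \<le> M then g k else 0)) = (\<Sum>j\<le>M. C j * g j)"
    by (simp del: sum.atMost_Suc add: sum.atMost_Suc[of _ M])
  finally have lhs: "(\<Sum>k\<le>Suc M. C k * elem_sym_prod (Suc M - k) k (add_mset c A))
      = (\<Sum>j\<le>M. C j * g j) + (\<Sum>j\<le>M. C (Suc j) * g j)"
    by simp
  \<comment> \<open>the two correction terms agree because \<open>e\<^sub>a e\<^sub>b = e\<^sub>b e\<^sub>a\<close>\<close>
  have corr: "(\<Sum>j\<le>M. (if Suc M = 2 * j + 2 then C (Suc j) else 0) * g j)
      = (\<Sum>j\<le>M. (if Suc M = 2 * j then C j else 0) * g j)"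
  proof -
    have "(\<Sum>j\<le>M. (if Suc M = 2 * j then C j else 0) * g j)
        = (\<Sum>j\<le>Suc M. (if Suc M = 2 * j then C j else 0) * g j)"
      by simp
    also have "\<dots> = (\<Sum>j\<le>M. (if Suc M = 2 * Suc j then C (Suc j) else 0) * g (Suc j))"
      by (subst sum.atMost_Suc_shift) simp
    also have "\<dots> = (\<Sum>j\<le>M. (if Suc M = 2 * j + 2 then C (Suc j) else 0) * g j)"
      by (intro sum.cong refl) (auto simp: g_def elem_sym_prod_commute)
    finally show ?thesis ..
  qed
  show ?thesis
    unfolding lhs g_def[symmetric]
    using corr by (simp add: distrib_right left_diff_distrib sum.distrib sum_subtractf)
qed

lemma sum_elem_sym_prod_add_top2:
  fixes C :: "nat \<Rightarrow> int poly"
  assumes "c \<notin># A" "c \<noteq> 0"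
  shows "(\<Sum>k\<le>Suc (Suc M). C k * elem_sym_prod (Suc (Suc M) - k) k (add_mset c (add_mset c A)))
    = (\<Sum>j\<le>M. C (Suc j) * elem_sym_prod (M - j) j A)"
proof -
  have top: "elem_sym_prod (Suc (Suc M) - k) k (add_mset c (add_mset c A)) =
      (if 1 \<le> k \<and> k \<le> Suc M then elem_sym_prod (Suc M - k) (k - 1) A else 0)" for k
    using elem_sym_prod_replicate_add[OF assms, of "Suc (Suc M) - k" k 2]
    by (cases "k \<le> Suc M") (auto simp: numeral_2_eq_2 Suc_diff_le)
  show ?thesis
    by (simp add: top sum.atMost_Suc_shift[of _ "Suc M"] del: sum.atMost_Suc)
      (simp add: Suc_diff_le)
qed

section \<open>Removing the largest color class\<close>

definition lower_degree :: "(nat \<Rightarrow> nat \<Rightarrow> bool) \<Rightarrow> nat set \<Rightarrow> nat \<Rightarrow> nat" where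
  "lower_degree E W v = card {u \<in> W. u < v \<and> E u v}"

definition independent :: "(nat \<Rightarrow> nat \<Rightarrow> bool) \<Rightarrow> nat set \<Rightarrow> bool" where
  "independent E T \<longleftrightarrow> (\<forall>i\<in>T. \<forall>j\<in>T. \<not> E i j)"

definition colorings :: "nat set \<Rightarrow> (nat \<Rightarrow> nat \<Rightarrow> bool) \<Rightarrow> nat multiset \<Rightarrow> (nat \<Rightarrow> nat) set" where
  "colorings W E \<alpha> =
     {\<kappa> \<in> W \<rightarrow>\<^sub>E set_mset \<alpha>. proper_coloring W E \<kappa> \<and> image_mset \<kappa> (mset_set W) = \<alpha>}"

lemma chrom_qsf_colorings: "chrom_qsf W E \<alpha> = (\<Sum>\<kappa>\<in>colorings W E \<alpha>. monom 1 (asc W E \<kappa>))"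
  by (simp add: chrom_qsf_def colorings_def)

lemma finite_colorings: "finite W \<Longrightarrow> finite (colorings W E \<alpha>)"
  by (rule finite_subset[of _ "W \<rightarrow>\<^sub>E set_mset \<alpha>"]) (auto simp: colorings_def intro!: finite_PiE)

lemma chrom_qsf_size_neq:
  assumes "finite W" "size \<alpha> \<noteq> card W"
  shows "chrom_qsf W E \<alpha> = 0"
proof -
  have "colorings W E \<alpha> = {}"
    using assms by (auto simp: colorings_def dest: arg_cong[of _ _ size])
  then show ?thesis
    by (simp add: chrom_qsf_colorings)
qed

lemma chrom_qsf_zero_color:
  assumes "0 \<in># \<alpha>"
  shows "chrom_qsf W E \<alpha> = 0"
proof -
  have "\<kappa> \<notin> colorings W E \<alpha>" for \<kappa>
  proof
    assume \<kappa>: "\<kappa> \<in> colorings W E \<alpha>"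
    then obtain u where "u \<in># mset_set W" "\<kappa> u = 0"
      using assms by (auto simp: colorings_def)
    moreover from this have "u \<in> W"
      by (metis elem_mset_set empty_iff mset_set.infinite set_mset_empty)
    ultimately show False
      using \<kappa> by (auto simp: colorings_def proper_coloring_def)
  qed
  then have "colorings W E \<alpha> = {}"
    by blast
  then show ?thesis
    by (simp add: chrom_qsf_colorings)
qed

lemma chrom_qsf_empty: "chrom_qsf {} E {#} = 1"
proof -
  have "colorings {} E {#} = {\<lambda>_. undefined}"
    by (auto simp: colorings_def proper_coloring_def)
  then show ?thesis
    by (simp add: chrom_qsf_colorings asc_def)
qed

lemma asc_cong: "(\<And>u. u \<in> W \<Longrightarrow> \<kappa> u = \<kappa>' u) \<Longrightarrow> asc W E \<kappa> = asc W E \<kappa>'"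
  unfolding asc_def by (rule arg_cong[where f = card]) auto

lemma asc_top_class:
  assumes "finite W" "T \<subseteq> W" "independent E T"
    and "\<And>v. v \<in> T \<Longrightarrow> \<kappa> v = c" "\<And>u. u \<in> W - T \<Longrightarrow> \<kappa> u < c"
  shows "asc W E \<kappa> = asc (W - T) E \<kappa> + (\<Sum>v\<in>T. lower_degree E W v)"
proof -
  let ?asc = "\<lambda>U. {(i, j). i \<in> U \<and> j \<in> U \<and> i < j \<and> E i j \<and> \<kappa> i < \<kappa> j}"
  let ?into = "(\<lambda>(j, i). (i, j)) ` Sigma T (\<lambda>j. {i \<in> W. i < j \<and> E i j})"
  \<comment> \<open>an ascent ends in \<open>T\<close> iff it is an edge from below into \<open>T\<close>; none starts in \<open>T\<close>\<close>
  have split: "?asc W = ?asc (W - T) \<union> ?into"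
  proof (intro equalityI subsetI)
    fix p assume "p \<in> ?asc W"
    then obtain i j where p: "p = (i, j)" "i \<in> W" "j \<in> W" "i < j" "E i j" "\<kappa> i < \<kappa> j"
      by blast
    have "i \<notin> T"
      using p assms(3-5) unfolding independent_def by (metis Diff_iff not_less_iff_gr_or_eq)
    show "p \<in> ?asc (W - T) \<union> ?into"
    proof (cases "j \<in> T")
      case True
      then have "(j, i) \<in> Sigma T (\<lambda>j. {i \<in> W. i < j \<and> E i j})"
        using p by simp
      then show ?thesis
        unfolding p by (intro UnI2 rev_image_eqI) auto
    qed (use p \<open>i \<notin> T\<close> in auto)
  next
    fix p assume "p \<in> ?asc (W - T) \<union> ?into"
    moreover have "\<kappa> i < \<kappa> j" if "j \<in> T" "i \<in> W" "E i j" for i j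
      using that assms(3-5) unfolding independent_def by (metis Diff_iff)
    ultimately show "p \<in> ?asc W"
      using assms(2) by auto
  qed
  have "card ?into = (\<Sum>v\<in>T. lower_degree E W v)"
    using assms(1,2) finite_subset[OF assms(2,1)]
    by (subst card_image) (auto simp: inj_on_def lower_degree_def)
  moreover have "finite (?asc (W - T))"
    by (rule finite_subset[of _ "W \<times> W"]) (auto simp: assms(1))
  moreover have "finite ?into"
    using assms(1,2) by (auto intro: finite_subset)
  moreover have "?asc (W - T) \<inter> ?into = {}"
    by auto
  ultimately show ?thesis
    unfolding asc_def split by (simp add: card_Un_disjoint)
qed

lemma image_mset_mset_set_cong:
  "(\<And>u. u \<in> W \<Longrightarrow> \<kappa> u = \<kappa>' u) \<Longrightarrow> image_mset \<kappa> (mset_set W) = image_mset \<kappa>' (mset_set W)"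
  by (cases "finite W") (auto intro: image_mset_cong)

lemma image_mset_mset_set_Diff:
  assumes "finite W" "T \<subseteq> W"
  shows "image_mset \<kappa> (mset_set W) = image_mset \<kappa> (mset_set T) + image_mset \<kappa> (mset_set (W - T))"
proof -
  have "mset_set W = mset_set T + mset_set (W - T)"
    using assms mset_set_Union[of T "W - T"] by (simp add: Un_absorb1 finite_subset)
  then show ?thesis
    by simp
qed

lemma colorings_extend_top_class:
  assumes "finite W" "T \<subseteq> W" "independent E T" "c \<notin># A" "0 < c"
    and \<kappa>: "\<kappa> \<in> colorings (W - T) E A"
  shows "(\<lambda>u. if u \<in> T then c else \<kappa> u) \<in> colorings W E (replicate_mset (card T) c + A)"
    (is "?\<kappa> \<in> _")
proof -
  have \<kappa>_Pi: "\<kappa> \<in> W - T \<rightarrow>\<^sub>E set_mset A" and \<kappa>_proper: "proper_coloring (W - T) E \<kappa>"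
    and \<kappa>_image: "image_mset \<kappa> (mset_set (W - T)) = A"
    using \<kappa> by (auto simp: colorings_def)
  have "?\<kappa> \<in> W \<rightarrow>\<^sub>E set_mset (replicate_mset (card T) c + A)"
  proof (rule PiE_I)
    fix u assume "u \<in> W"
    show "?\<kappa> u \<in> set_mset (replicate_mset (card T) c + A)"
    proof (cases "u \<in> T")
      case True
      then have "card T \<noteq> 0"
        using finite_subset[OF assms(2,1)] by auto
      with True show ?thesis
        by simp
    qed (use \<open>u \<in> W\<close> PiE_mem[OF \<kappa>_Pi] in auto)
  next
    fix u assume "u \<notin> W"
    then show "?\<kappa> u = undefined"
      using assms(2) PiE_arb[OF \<kappa>_Pi] by auto
  qed
  moreover have "proper_coloring W E ?\<kappa>"
    unfolding proper_coloring_def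
  proof (intro conjI ballI impI)
    fix v assume "v \<in> W"
    then show "0 < ?\<kappa> v"
      using \<kappa>_proper assms(5) by (simp add: proper_coloring_def)
  next
    fix i j assume ij: "i \<in> W" "j \<in> W" "E i j"
    have "\<kappa> u \<noteq> c" if "u \<in> W - T" for u
      using PiE_mem[OF \<kappa>_Pi that] assms(4) by auto
    then show "?\<kappa> i \<noteq> ?\<kappa> j"
      using ij \<kappa>_proper assms(3) unfolding proper_coloring_def independent_def
      by (cases "i \<in> T"; cases "j \<in> T") auto
  qed
  moreover have "image_mset ?\<kappa> (mset_set W) = replicate_mset (card T) c + A"
  proof -
    have "image_mset ?\<kappa> (mset_set T) = replicate_mset (card T) c"
      using image_mset_mset_set_cong[of T ?\<kappa> "\<lambda>_. c"] by (simp add: image_mset_const_eq)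
    moreover have "image_mset ?\<kappa> (mset_set (W - T)) = A"
      using image_mset_mset_set_cong[of "W - T" ?\<kappa> \<kappa>] \<kappa>_image by simp
    ultimately show ?thesis
      using image_mset_mset_set_Diff[OF assms(1,2), of ?\<kappa>] by simp
  qed
  ultimately show ?thesis
    by (simp add: colorings_def)
qed

lemma colorings_remove_top_class:
  assumes "finite W" "c \<notin># A" and \<kappa>: "\<kappa> \<in> colorings W E (replicate_mset j c + A)"
  defines "T \<equiv> {u \<in> W. \<kappa> u = c}"
  shows "card T = j" "independent E T" "restrict \<kappa> (W - T) \<in> colorings (W - T) E A"
proof -
  have \<kappa>_Pi: "\<kappa> \<in> W \<rightarrow>\<^sub>E set_mset (replicate_mset j c + A)" and \<kappa>_proper: "proper_coloring W E \<kappa>"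
    and \<kappa>_image: "image_mset \<kappa> (mset_set W) = replicate_mset j c + A"
    using \<kappa> by (auto simp: colorings_def)
  have "T \<subseteq> W" "finite T"
    using assms(1) by (auto simp: T_def)
  have "image_mset \<kappa> (mset_set T) = replicate_mset (card T) c"
    using image_mset_mset_set_cong[of T \<kappa> "\<lambda>_. c"] by (simp add: T_def image_mset_const_eq)
  then have split: "replicate_mset j c + A = replicate_mset (card T) c + image_mset \<kappa> (mset_set (W - T))"
    using image_mset_mset_set_Diff[OF assms(1) \<open>T \<subseteq> W\<close>, of \<kappa>] \<kappa>_image by simp
  have "count (image_mset \<kappa> (mset_set (W - T))) c = 0"
    unfolding count_eq_zero_iff using assms(1) by (auto simp: T_def)
  moreover have "count (replicate_mset j c + A) c = count (replicate_mset (card T) c + image_mset \<kappa> (mset_set (W - T))) c"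
    by (simp only: split)
  ultimately show "card T = j"
    using assms(2) by (simp add: not_in_iff)
  then have image: "image_mset \<kappa> (mset_set (W - T)) = A"
    using split by simp
  show "independent E T"
    using \<kappa>_proper unfolding independent_def proper_coloring_def T_def by blast
  have "restrict \<kappa> (W - T) \<in> W - T \<rightarrow>\<^sub>E set_mset A"
    using assms(1) by (auto simp flip: image)
  moreover have "image_mset (restrict \<kappa> (W - T)) (mset_set (W - T)) = A"
    using image_mset_mset_set_cong[of "W - T" "restrict \<kappa> (W - T)" \<kappa>] image by simp
  moreover have "proper_coloring (W - T) E (restrict \<kappa> (W - T))"
    using \<kappa>_proper by (simp add: proper_coloring_def)
  ultimately show "restrict \<kappa> (W - T) \<in> colorings (W - T) E A"
    by (simp add: colorings_def)
qed

lemma extend_top_class_inverse: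
  assumes "T \<subseteq> W" "c \<notin># A" and \<kappa>: "\<kappa> \<in> colorings (W - T) E A"
  shows "{u \<in> W. (if u \<in> T then c else \<kappa> u) = c} = T"
    and "restrict (\<lambda>u. if u \<in> T then c else \<kappa> u) (W - T) = \<kappa>"
proof -
  have \<kappa>_Pi: "\<kappa> \<in> W - T \<rightarrow>\<^sub>E set_mset A"
    using \<kappa> by (simp add: colorings_def)
  then show "{u \<in> W. (if u \<in> T then c else \<kappa> u) = c} = T"
    using assms(1,2) by (auto dest: PiE_mem)
  show "restrict (\<lambda>u. if u \<in> T then c else \<kappa> u) (W - T) = \<kappa>"
  proof
    fix u show "restrict (\<lambda>u. if u \<in> T then c else \<kappa> u) (W - T) u = \<kappa> u"
      using PiE_arb[OF \<kappa>_Pi, of u] by (cases "u \<in> W - T") simp_all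
  qed
qed

lemma asc_extend_top_class:
  assumes "finite W" "T \<subseteq> W" "independent E T" "\<And>x. x \<in># A \<Longrightarrow> x < c"
    and \<kappa>: "\<kappa> \<in> colorings (W - T) E A"
  shows "asc W E (\<lambda>u. if u \<in> T then c else \<kappa> u) = asc (W - T) E \<kappa> + (\<Sum>v\<in>T. lower_degree E W v)"
proof -
  have "\<kappa> \<in> W - T \<rightarrow>\<^sub>E set_mset A"
    using \<kappa> by (simp add: colorings_def)
  then have "asc W E (\<lambda>u. if u \<in> T then c else \<kappa> u)
      = asc (W - T) E (\<lambda>u. if u \<in> T then c else \<kappa> u) + (\<Sum>v\<in>T. lower_degree E W v)"
    using assms(4) by (intro asc_top_class[OF assms(1-3)]) (auto dest: PiE_mem)
  also have "asc (W - T) E (\<lambda>u. if u \<in> T then c else \<kappa> u) = asc (W - T) E \<kappa>"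
    by (rule asc_cong) simp
  finally show ?thesis .
qed

lemma chrom_qsf_top_color:
  assumes "finite W" "c \<notin># A" "\<And>x. x \<in># A \<Longrightarrow> x < c" "0 < c"
  shows "chrom_qsf W E (replicate_mset j c + A) =
    (\<Sum>T | T \<subseteq> W \<and> card T = j \<and> independent E T.
       monom 1 (\<Sum>v\<in>T. lower_degree E W v) * chrom_qsf (W - T) E A)"
proof -
  let ?Ts = "{T. T \<subseteq> W \<and> card T = j \<and> independent E T}"
  let ?S = "Sigma ?Ts (\<lambda>T. colorings (W - T) E A)"
  let ?top = "\<lambda>\<kappa>. {u \<in> W. \<kappa> u = c}"
  define extend :: "nat set \<times> (nat \<Rightarrow> nat) \<Rightarrow> nat \<Rightarrow> nat"
    where "extend = (\<lambda>(T, \<kappa>) u. if u \<in> T then c else \<kappa> u)"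
  have "finite ?Ts"
    by (rule finite_subset[of _ "Pow W"]) (auto simp: assms(1))
  then have "(\<Sum>T\<in>?Ts. monom 1 (\<Sum>v\<in>T. lower_degree E W v) * chrom_qsf (W - T) E A) =
      (\<Sum>(T, \<kappa>)\<in>?S. monom 1 (asc (W - T) E \<kappa> + (\<Sum>v\<in>T. lower_degree E W v)))"
    using assms(1)
    by (simp add: chrom_qsf_colorings sum_distrib_left mult_monom sum.Sigma finite_colorings add.commute)
  also have "\<dots> = (\<Sum>\<kappa>\<in>colorings W E (replicate_mset j c + A). monom 1 (asc W E \<kappa>))"
  proof (rule sum.reindex_bij_witness[where j = extend and i = "\<lambda>\<kappa>. (?top \<kappa>, restrict \<kappa> (W - ?top \<kappa>))"])
    fix p assume "p \<in> ?S"
    then obtain T \<kappa> where p: "p = (T, \<kappa>)" and T: "T \<subseteq> W" "card T = j" "independent E T"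
      and \<kappa>: "\<kappa> \<in> colorings (W - T) E A"
      by auto
    show "(?top (extend p), restrict (extend p) (W - ?top (extend p))) = p"
      using extend_top_class_inverse[OF T(1) assms(2) \<kappa>] by (simp add: p extend_def)
    show "extend p \<in> colorings W E (replicate_mset j c + A)"
      using colorings_extend_top_class[OF assms(1) T(1,3) assms(2,4) \<kappa>] T(2)
      by (simp add: p extend_def)
    show "monom 1 (asc W E (extend p)) =
        (case p of (T, \<kappa>) \<Rightarrow> monom 1 (asc (W - T) E \<kappa> + (\<Sum>v\<in>T. lower_degree E W v)))"
      using asc_extend_top_class[OF assms(1) T(1,3) assms(3) \<kappa>] by (simp add: p extend_def)
  next
    fix \<kappa> assume \<kappa>: "\<kappa> \<in> colorings W E (replicate_mset j c + A)"
    then have \<kappa>_Pi: "\<kappa> \<in> W \<rightarrow>\<^sub>E set_mset (replicate_mset j c + A)"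
      by (simp add: colorings_def)
    show "extend (?top \<kappa>, restrict \<kappa> (W - ?top \<kappa>)) = \<kappa>"
    proof
      fix u show "extend (?top \<kappa>, restrict \<kappa> (W - ?top \<kappa>)) u = \<kappa> u"
        using PiE_arb[OF \<kappa>_Pi, of u] by (cases "u \<in> W") (simp_all add: extend_def)
    qed
    show "(?top \<kappa>, restrict \<kappa> (W - ?top \<kappa>)) \<in> ?S"
      using colorings_remove_top_class[OF assms(1,2) \<kappa>] by auto
  qed
  finally show ?thesis
    by (simp add: chrom_qsf_colorings)
qed

section \<open>The coefficients\<close>

definition non_edges :: "(nat \<Rightarrow> nat \<Rightarrow> bool) \<Rightarrow> nat set \<Rightarrow> (nat \<times> nat) set" where
  "non_edges E W = {p. fst p \<in> W \<and> snd p \<in> W \<and> fst p < snd p \<and> \<not> E (fst p) (snd p)}"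

fun may_follow :: "(nat \<Rightarrow> nat \<Rightarrow> bool) \<Rightarrow> nat option \<Rightarrow> nat \<Rightarrow> bool" where
  "may_follow E None v \<longleftrightarrow> True"
| "may_follow E (Some x) v \<longleftrightarrow> (x < v \<longrightarrow> E x v)"

definition removable :: "(nat \<Rightarrow> nat \<Rightarrow> bool) \<Rightarrow> nat set \<Rightarrow> nat \<Rightarrow> bool" where
  "removable E W v \<longleftrightarrow> W = {v} \<or> (\<exists>u\<in>W. E v u)"

text \<open>\<open>chain_sum E W x\<close> sums, over the orderings \<open>v\<^sub>1, \<dots>, v\<^sub>m\<close> of \<open>W\<close> in which every
  \<open>v\<^sub>i\<close> but the last has a neighbour among the later vertices and \<open>v\<^sub>i < v\<^sub>i\<^sub>+\<^sub>1\<close> forces an edge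
  (also for \<open>v\<^sub>0\<close> when \<open>x = Some v\<^sub>0\<close>), the monomial \<open>t\<^sup>w\<close>, where \<open>w\<close> counts the adjacent
  pairs \<open>i < j\<close> with \<open>v\<^sub>j < v\<^sub>i\<close>. The natural-number argument of \<open>chain_sum_fuel\<close> only bounds
  the recursion.\<close>

fun chain_sum_fuel :: "(nat \<Rightarrow> nat \<Rightarrow> bool) \<Rightarrow> nat \<Rightarrow> nat set \<Rightarrow> nat option \<Rightarrow> int poly" where
  "chain_sum_fuel E 0 W x = 1"
| "chain_sum_fuel E (Suc n) W x =
     (\<Sum>v | v \<in> W \<and> may_follow E x v \<and> removable E W v.
        monom 1 (lower_degree E W v) * chain_sum_fuel E n (W - {v}) (Some v))"

definition chain_sum :: "(nat \<Rightarrow> nat \<Rightarrow> bool) \<Rightarrow> nat set \<Rightarrow> nat option \<Rightarrow> int poly" where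
  "chain_sum E W x = chain_sum_fuel E (card W) W x"

text \<open>\<open>e_coeff E k W\<close> will be the coefficient of \<open>e\<^bsub>(|W| - k, k)\<^esub>\<close> in the chromatic
  quasisymmetric function of \<open>(W, E)\<close>.\<close>

fun e_coeff :: "(nat \<Rightarrow> nat \<Rightarrow> bool) \<Rightarrow> nat \<Rightarrow> nat set \<Rightarrow> int poly" where
  "e_coeff E 0 W = chain_sum E W None"
| "e_coeff E (Suc k) W =
     (\<Sum>p\<in>non_edges E W. monom 1 (lower_degree E W (fst p) + lower_degree E W (snd p))
        * e_coeff E k (W - {fst p, snd p}))"

definition deletion_sum :: "(nat \<Rightarrow> nat \<Rightarrow> bool) \<Rightarrow> nat \<Rightarrow> nat set \<Rightarrow> int poly" where
  "deletion_sum E k W = (\<Sum>v\<in>W. monom 1 (lower_degree E W v) * e_coeff E k (W - {v}))"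

lemma chain_sum_empty [simp]: "chain_sum E {} x = 1"
  by (simp add: chain_sum_def)

lemma chain_sum_unfold:
  assumes "finite W" "W \<noteq> {}"
  shows "chain_sum E W x = (\<Sum>v | v \<in> W \<and> may_follow E x v \<and> removable E W v.
    monom 1 (lower_degree E W v) * chain_sum E (W - {v}) (Some v))"
proof -
  obtain n where n: "card W = Suc n"
    using assms by (metis card_0_eq not0_implies_Suc)
  then have "card (W - {v}) = n" if "v \<in> W" for v
    using that assms(1) by simp
  then show ?thesis
    unfolding chain_sum_def n by (auto intro!: sum.cong)
qed

lemma chain_sum_unconstrained:
  assumes "finite U" "\<And>u. u \<in> U \<Longrightarrow> may_follow E (Some w) u"
  shows "chain_sum E U (Some w) = chain_sum E U None"
proof (cases "U = {}")
  case False
  have "{v. v \<in> U \<and> may_follow E (Some w) v \<and> removable E U v} =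
      {v. v \<in> U \<and> may_follow E None v \<and> removable E U v}"
    using assms(2) by auto
  then show ?thesis
    using chain_sum_unfold[OF assms(1) False] by simp
qed simp

lemma lower_degree_remove:
  assumes "finite W" "v \<noteq> x"
  shows "lower_degree E W x = lower_degree E (W - {v}) x + of_bool (v \<in> W \<and> v < x \<and> E v x)"
proof (cases "v \<in> W \<and> v < x \<and> E v x")
  case True
  then have "{u \<in> W. u < x \<and> E u x} = insert v {u \<in> W - {v}. u < x \<and> E u x}"
    by auto
  then show ?thesis
    using True assms by (simp add: lower_degree_def)
next
  case False
  then have "{u \<in> W. u < x \<and> E u x} = {u \<in> W - {v}. u < x \<and> E u x}"
    by auto
  then show ?thesis
    using False by (simp add: lower_degree_def)
qed

lemma lower_degree_singleton [simp]: "lower_degree E {v} v = 0"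
  by (simp add: lower_degree_def)

lemma finite_non_edges: "finite W \<Longrightarrow> finite (non_edges E W)"
  by (rule finite_subset[of _ "W \<times> W"]) (auto simp: non_edges_def)

lemma card_remove_non_edge:
  assumes "finite W" "p \<in> non_edges E W"
  shows "card (W - {fst p, snd p}) = card W - 2" "2 \<le> card W"
proof -
  have "{fst p, snd p} \<subseteq> W" "card {fst p, snd p} = 2"
    using assms(2) by (auto simp: non_edges_def)
  then show "card (W - {fst p, snd p}) = card W - 2" "2 \<le> card W"
    using assms(1) by (simp add: card_Diff_subset, metis card_mono)
qed

lemma e_coeff_vanish: "finite W \<Longrightarrow> card W < 2 * k \<Longrightarrow> e_coeff E k W = 0"
proof (induction k arbitrary: W)
  case (Suc k)
  have "e_coeff E k (W - {fst p, snd p}) = 0" if "p \<in> non_edges E W" for p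
    using Suc card_remove_non_edge[OF Suc.prems(1) that] by simp
  then show ?case
    by simp
qed simp

lemma deletion_sum_vanish:
  assumes "finite W" "card W < 2 * k + 1"
  shows "deletion_sum E k W = 0"
proof -
  have "e_coeff E k (W - {v}) = 0" if "v \<in> W" for v
  proof -
    have "0 < card W"
      using assms(1) that card_gt_0_iff by blast
    then show ?thesis
      using assms that by (intro e_coeff_vanish) auto
  qed
  then show ?thesis
    by (simp add: deletion_sum_def)
qed

lemma sum_split_filter: "finite A \<Longrightarrow> sum f A = sum f {x\<in>A. P x} + sum f {x\<in>A. \<not> P x}"
  using sum.Int_Diff[of A f "{x. P x}"] by (simp add: Int_def set_diff_eq)

lemma chain_sum_singleton: "chain_sum E {v} None = 1"
proof -
  have "{w. w \<in> {v} \<and> may_follow E None w \<and> removable E {v} w} = {v}"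
    by (auto simp: removable_def)
  then show ?thesis
    using chain_sum_unfold[of "{v}" E None] by simp
qed

lemma sum_chain_sum_after_self:
  assumes "finite W" "2 \<le> card W"
  shows "(\<Sum>v\<in>W. monom 1 (lower_degree E W v) * chain_sum E (W - {v}) (Some v)) =
    chain_sum E W None +
    (\<Sum>v | v \<in> W \<and> (\<forall>u\<in>W. \<not> E v u). monom 1 (lower_degree E W v) * chain_sum E (W - {v}) (Some v))"
proof -
  have "W \<noteq> {}" "\<And>v. W \<noteq> {v}"
    using assms by auto
  then have "{v. v \<in> W \<and> may_follow E None v \<and> removable E W v} = {v \<in> W. \<exists>u\<in>W. E v u}"
    by (auto simp: removable_def)
  then show ?thesis
    using chain_sum_unfold[OF assms(1) \<open>W \<noteq> {}\<close>, of E None]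
      sum_split_filter[OF assms(1), of _ "\<lambda>v. \<exists>u\<in>W. E v u"]
    by simp
qed

lemma lower_degree_delete_vertex:
  assumes "finite W" "v \<in> W" "v \<noteq> a" "v \<noteq> b"
  shows "lower_degree E W v + lower_degree E (W - {v}) a + lower_degree E (W - {v}) b
     + (of_bool (v < a \<and> E v a) + of_bool (v < b \<and> E v b))
     = lower_degree E W v + lower_degree E W a + lower_degree E W b"
  using lower_degree_remove[OF assms(1,3), of E] lower_degree_remove[OF assms(1,4), of E] assms(2)
  by simp

lemma lower_degree_delete_pair:
  assumes "finite W" "a \<in> W" "b \<in> W" "v \<noteq> a" "v \<noteq> b" "a \<noteq> b"
  shows "lower_degree E W a + lower_degree E W b + lower_degree E (W - {a, b}) v
     + (of_bool (a < v \<and> E a v) + of_bool (b < v \<and> E b v))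
     = lower_degree E W v + lower_degree E W a + lower_degree E W b"
proof -
  have "W - {a} - {b} = W - {a, b}"
    by auto
  then show ?thesis
    using lower_degree_remove[OF assms(1), of a v E] lower_degree_remove[of "W - {a}" b v E] assms
    by simp
qed

definition vertex_first_degree :: "(nat \<Rightarrow> nat \<Rightarrow> bool) \<Rightarrow> nat set \<Rightarrow> nat \<times> nat \<times> nat \<Rightarrow> nat" where
  "vertex_first_degree E W t = lower_degree E W (fst t)
     + lower_degree E (W - {fst t}) (fst (snd t)) + lower_degree E (W - {fst t}) (snd (snd t))"

definition pair_first_degree :: "(nat \<Rightarrow> nat \<Rightarrow> bool) \<Rightarrow> nat set \<Rightarrow> nat \<times> nat \<times> nat \<Rightarrow> nat" where
  "pair_first_degree E W t = lower_degree E W (fst (snd t)) + lower_degree E W (snd (snd t))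
     + lower_degree E (W - {fst (snd t), snd (snd t)}) (fst t)"

section \<open>Unit interval graphs without independent triples\<close>

locale uio_alpha2 =
  fixes E :: "nat \<Rightarrow> nat \<Rightarrow> bool" and V :: "nat set"
  assumes finite_V: "finite V"
    and sym: "\<And>a b. E a b = E b a"
    and irrefl: "\<And>a. \<not> E a a"
    and unit_interval: "\<And>a b c. a \<in> V \<Longrightarrow> b \<in> V \<Longrightarrow> c \<in> V \<Longrightarrow> a < b \<Longrightarrow> b < c \<Longrightarrow> E a c \<Longrightarrow>
      E a b \<and> E b c"
    and no_indep_triple: "\<And>a b c. a \<in> V \<Longrightarrow> b \<in> V \<Longrightarrow> c \<in> V \<Longrightarrow> a \<noteq> b \<Longrightarrow> a \<noteq> c \<Longrightarrow> b \<noteq> c \<Longrightarrow>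
      E a b \<or> E a c \<or> E b c"
begin

lemma finite_subset_V: "W \<subseteq> V \<Longrightarrow> finite W"
  using finite_V finite_subset by blast

lemma may_follow_upper_non_edge:
  assumes "W \<subseteq> V" "(a, b) \<in> non_edges E W" "u \<in> W"
  shows "may_follow E (Some b) u"
proof (rule ccontr)
  assume "\<not> may_follow E (Some b) u"
  then have bu: "b < u" "\<not> E b u"
    by auto
  have ab: "a < b" "\<not> E a b" "a \<in> W" "b \<in> W"
    using assms(2) by (auto simp: non_edges_def)
  then have "\<not> E a u"
    using unit_interval[of a b u] bu assms by auto
  then show False
    using no_indep_triple[of a b u] ab bu assms sym by auto
qed

lemma lower_degree_isolated: "(\<And>u. u \<in> W \<Longrightarrow> \<not> E z u) \<Longrightarrow> lower_degree E W z = 0"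
  unfolding lower_degree_def using sym by auto

lemma chain_sum_delete:
  assumes W: "W \<subseteq> V" "2 \<le> card W" and v: "v \<in> W"
  shows "chain_sum E (W - {v}) None = chain_sum E (W - {v}) (Some v) +
    (\<Sum>w | w \<in> W - {v} \<and> v < w \<and> \<not> E v w \<and> removable E (W - {v}) w.
       monom 1 (lower_degree E W w) * chain_sum E (W - {v, w}) None)"
proof -
  have fin: "finite (W - {v})"
    using finite_subset_V[OF W(1)] by simp
  have "card (W - {v}) \<noteq> 0"
    using W v finite_subset_V[OF W(1)] by simp
  then have ne: "W - {v} \<noteq> {}"
    by (metis card.empty)
  let ?f = "\<lambda>w. monom 1 (lower_degree E (W - {v}) w) * chain_sum E (W - {v} - {w}) (Some w)"
  let ?R = "{w \<in> W - {v}. removable E (W - {v}) w}"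
  have "chain_sum E (W - {v}) None = sum ?f ?R"
    using chain_sum_unfold[OF fin ne, of E None] by simp
  also have "\<dots> = sum ?f {w \<in> ?R. may_follow E (Some v) w} + sum ?f {w \<in> ?R. \<not> may_follow E (Some v) w}"
    using fin by (intro sum_split_filter) simp
  also have "sum ?f {w \<in> ?R. may_follow E (Some v) w} = chain_sum E (W - {v}) (Some v)"
    using chain_sum_unfold[OF fin ne, of E "Some v"] by (simp add: conj_commute conj_left_commute)
  also have "sum ?f {w \<in> ?R. \<not> may_follow E (Some v) w}
     = (\<Sum>w | w \<in> W - {v} \<and> v < w \<and> \<not> E v w \<and> removable E (W - {v}) w.
          monom 1 (lower_degree E W w) * chain_sum E (W - {v, w}) None)"
  proof (rule sum.cong)
    fix w assume w: "w \<in> {w. w \<in> W - {v} \<and> v < w \<and> \<not> E v w \<and> removable E (W - {v}) w}"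
    then have vw: "(v, w) \<in> non_edges E W"
      using v by (simp add: non_edges_def)
    have "lower_degree E W w = lower_degree E (W - {v}) w"
      using lower_degree_remove[of W v w E] finite_subset_V[OF W(1)] w by auto
    moreover have "chain_sum E (W - {v} - {w}) (Some w) = chain_sum E (W - {v} - {w}) None"
      using may_follow_upper_non_edge[OF W(1) vw] fin by (intro chain_sum_unconstrained) auto
    moreover have "W - {v} - {w} = W - {v, w}"
      by auto
    ultimately show "?f w = monom 1 (lower_degree E W w) * chain_sum E (W - {v, w}) None"
      by simp
  qed auto
  finally show ?thesis .
qed

lemma chain_sum_after_isolated:
  assumes W: "W \<subseteq> V" "3 \<le> card W" and z: "z \<in> W" "\<And>u. u \<in> W \<Longrightarrow> \<not> E z u"
  shows "chain_sum E (W - {z}) (Some z) =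
    (\<Sum>v | v \<in> W \<and> v < z. monom 1 (lower_degree E W v) * chain_sum E (W - {v, z}) None)"
proof -
  have fW: "finite W"
    using finite_subset_V[OF W(1)] .
  have card: "2 \<le> card (W - {z})"
    using W z fW by simp
  then have ne: "W - {z} \<noteq> {}"
    by (metis card.empty not_numeral_le_zero)
  \<comment> \<open>by \<open>\<alpha> \<le> 2\<close> the vertices other than the isolated \<open>z\<close> form a clique\<close>
  have clique: "E u v" if "u \<in> W - {z}" "v \<in> W - {z}" "u \<noteq> v" for u v
    using no_indep_triple[of z u v] that z W sym by blast
  have "{v. v \<in> W - {z} \<and> may_follow E (Some z) v \<and> removable E (W - {z}) v} = {v \<in> W. v < z}"
  proof (intro set_eqI iffI)
    fix v assume "v \<in> {v. v \<in> W - {z} \<and> may_follow E (Some z) v \<and> removable E (W - {z}) v}"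
    then show "v \<in> {v \<in> W. v < z}"
      using z by (auto simp: linorder_neq_iff)
  next
    fix v assume v: "v \<in> {v \<in> W. v < z}"
    have "card (W - {z} - {v}) \<noteq> 0"
      using card fW v by simp
    then have "W - {z} - {v} \<noteq> {}"
      by (metis card.empty)
    then obtain u where "u \<in> W - {z}" "u \<noteq> v"
      by blast
    then have "removable E (W - {z}) v"
      using clique v unfolding removable_def by auto
    then show "v \<in> {v. v \<in> W - {z} \<and> may_follow E (Some z) v \<and> removable E (W - {z}) v}"
      using v by auto
  qed
  then have "chain_sum E (W - {z}) (Some z) = (\<Sum>v | v \<in> W \<and> v < z.
      monom 1 (lower_degree E (W - {z}) v) * chain_sum E (W - {z} - {v}) (Some v))"
    using chain_sum_unfold[of "W - {z}" E "Some z"] fW ne by simp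
  also have "\<dots> = (\<Sum>v | v \<in> W \<and> v < z. monom 1 (lower_degree E W v) * chain_sum E (W - {v, z}) None)"
  proof (rule sum.cong)
    fix v assume v: "v \<in> {v \<in> W. v < z}"
    have "lower_degree E W v = lower_degree E (W - {z}) v"
      using lower_degree_remove[of W z v E] fW v z sym by auto
    moreover have "chain_sum E (W - {z} - {v}) (Some v) = chain_sum E (W - {z} - {v}) None"
      using clique v by (intro chain_sum_unconstrained) (auto simp: fW)
    moreover have "W - {z} - {v} = W - {v, z}"
      by auto
    ultimately show "monom 1 (lower_degree E (W - {z}) v) * chain_sum E (W - {z} - {v}) (Some v) =
        monom 1 (lower_degree E W v) * chain_sum E (W - {v, z}) None"
      by simp
  qed simp
  finally show ?thesis .
qed

lemma sum_isolated_card2: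
  assumes "card W = 2"
  shows "(\<Sum>v | v \<in> W \<and> (\<forall>u\<in>W. \<not> E v u). monom 1 (lower_degree E W v) * chain_sum E (W - {v}) (Some v))
      = e_coeff E 1 W"
    and "{p \<in> non_edges E W. \<not> removable E (W - {fst p}) (snd p)} = {}"
proof -
  obtain a b where ab: "W = {a, b}" "a < b"
    using assms by (metis card_2_iff linorder_neq_iff insert_commute)
  have "removable E (W - {fst p}) (snd p)" if "p \<in> non_edges E W" for p
    using that ab by (auto simp: non_edges_def removable_def)
  then show "{p \<in> non_edges E W. \<not> removable E (W - {fst p}) (snd p)} = {}"
    by blast
  show "(\<Sum>v | v \<in> W \<and> (\<forall>u\<in>W. \<not> E v u). monom 1 (lower_degree E W v) * chain_sum E (W - {v}) (Some v))
      = e_coeff E 1 W"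
  proof (cases "E a b")
    case True
    then have no_iso: "{v. v \<in> W \<and> (\<forall>u\<in>W. \<not> E v u)} = {}" and "non_edges E W = {}"
      using ab sym by (auto simp: non_edges_def)
    then show ?thesis
      unfolding no_iso by simp
  next
    case False
    then have iso: "{v. v \<in> W \<and> (\<forall>u\<in>W. \<not> E v u)} = {a, b}" and "non_edges E W = {(a, b)}"
      using ab sym irrefl by (auto simp: non_edges_def)
    moreover have "lower_degree E W a = 0" "lower_degree E W b = 0"
      using ab False sym irrefl by (auto intro!: lower_degree_isolated)
    moreover have "W - {a} = {b}" "W - {b} = {a}" "W - {a, b} = {}"
      using ab by auto
    moreover have "chain_sum E {b} (Some a) = 0"
    proof -
      have none: "{w. w \<in> {b} \<and> may_follow E (Some a) w \<and> removable E {b} w} = {}"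
        using ab False by auto
      show ?thesis
        using chain_sum_unfold[of "{b}" E "Some a"] unfolding none by simp
    qed
    moreover have "chain_sum E {a} (Some b) = 1"
    proof -
      have "{w. w \<in> {a} \<and> may_follow E (Some b) w \<and> removable E {a} w} = {a}"
        using ab by (auto simp: removable_def)
      then show ?thesis
        using chain_sum_unfold[of "{a}" E "Some b"] by simp
    qed
    ultimately show ?thesis
      using ab by simp
  qed
qed

lemma non_edges_isolated_upper:
  assumes "finite W" "3 \<le> card W"
  shows "{p \<in> non_edges E W. \<not> removable E (W - {fst p}) (snd p)}
    = (\<lambda>(z, v). (v, z)) ` (SIGMA z:{z \<in> W. \<forall>u\<in>W. \<not> E z u}. {v \<in> W. v < z})"
proof (intro set_eqI iffI)
  fix p assume "p \<in> (\<lambda>(z, v). (v, z)) ` (SIGMA z:{z \<in> W. \<forall>u\<in>W. \<not> E z u}. {v \<in> W. v < z})"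
  then obtain z v where p: "p = (v, z)" and zv: "z \<in> W" "\<forall>u\<in>W. \<not> E z u" "v \<in> W" "v < z"
    by auto
  have "card (W - {v}) \<noteq> 1"
    using assms zv by simp
  then have "W - {v} \<noteq> {z}"
    by (intro notI) simp
  then have "\<not> removable E (W - {v}) z"
    unfolding removable_def using zv(2) by blast
  moreover have "(v, z) \<in> non_edges E W"
    using zv sym[of v z] by (simp add: non_edges_def)
  ultimately show "p \<in> {p \<in> non_edges E W. \<not> removable E (W - {fst p}) (snd p)}"
    by (simp add: p)
next
  fix p assume p: "p \<in> {p \<in> non_edges E W. \<not> removable E (W - {fst p}) (snd p)}"
  obtain v z where vz: "p = (v, z)"
    by (rule prod.exhaust)
  have "v \<in> W" "z \<in> W" "v < z" "\<not> E v z" "\<forall>u\<in>W - {v}. \<not> E z u"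
    using p by (simp_all add: vz non_edges_def removable_def)
  moreover have "\<not> E z v"
    using \<open>\<not> E v z\<close> sym[of v z] by simp
  ultimately show "p \<in> (\<lambda>(z, v). (v, z)) ` (SIGMA z:{z \<in> W. \<forall>u\<in>W. \<not> E z u}. {v \<in> W. v < z})"
    by (force simp: vz)
qed

lemma sum_isolated_card_ge3:
  assumes W: "W \<subseteq> V" "3 \<le> card W"
  shows "(\<Sum>z | z \<in> W \<and> (\<forall>u\<in>W. \<not> E z u). monom 1 (lower_degree E W z) * chain_sum E (W - {z}) (Some z))
    = (\<Sum>p | p \<in> non_edges E W \<and> \<not> removable E (W - {fst p}) (snd p).
         monom 1 (lower_degree E W (fst p) + lower_degree E W (snd p)) * chain_sum E (W - {fst p, snd p}) None)"
proof -
  have fW: "finite W"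
    using finite_subset_V[OF W(1)] .
  define F where "F p = monom 1 (lower_degree E W (fst p) + lower_degree E W (snd p))
    * chain_sum E (W - {fst p, snd p}) None" for p
  define Iso where "Iso = {z \<in> W. \<forall>u\<in>W. \<not> E z u}"
  define below where "below z = {v \<in> W. v < z}" for z
  have fin: "finite Iso" "\<forall>z\<in>Iso. finite (below z)"
    using fW by (simp_all add: Iso_def below_def)
  have "(\<Sum>z\<in>Iso. monom 1 (lower_degree E W z) * chain_sum E (W - {z}) (Some z))
      = (\<Sum>z\<in>Iso. \<Sum>v\<in>below z. F (v, z))"
  proof (rule sum.cong[OF refl])
    fix z assume "z \<in> Iso"
    then have z: "z \<in> W" "\<And>u. u \<in> W \<Longrightarrow> \<not> E z u"
      by (auto simp: Iso_def)
    then show "monom 1 (lower_degree E W z) * chain_sum E (W - {z}) (Some z) = (\<Sum>v\<in>below z. F (v, z))"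
      using chain_sum_after_isolated[OF W z] lower_degree_isolated[of W z, OF z(2)]
      by (simp add: F_def below_def)
  qed
  also have "\<dots> = (\<Sum>(z, v)\<in>Sigma Iso below. F (v, z))"
    using fin by (rule sum.Sigma)
  also have "\<dots> = sum F ((\<lambda>(z, v). (v, z)) ` Sigma Iso below)"
    by (subst sum.reindex) (auto simp: inj_on_def split_def)
  also have "(\<lambda>(z, v). (v, z)) ` Sigma Iso below
      = {p \<in> non_edges E W. \<not> removable E (W - {fst p}) (snd p)}"
    unfolding non_edges_isolated_upper[OF fW W(2)] Iso_def below_def ..
  finally show ?thesis
    by (simp add: Iso_def F_def)
qed

lemma deletion_sum_0_expand:
  assumes W: "W \<subseteq> V" "2 \<le> card W"
  shows "deletion_sum E 0 W = chain_sum E W None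
    + (\<Sum>v | v \<in> W \<and> (\<forall>u\<in>W. \<not> E v u). monom 1 (lower_degree E W v) * chain_sum E (W - {v}) (Some v))
    + (\<Sum>p | p \<in> non_edges E W \<and> removable E (W - {fst p}) (snd p).
         monom 1 (lower_degree E W (fst p) + lower_degree E W (snd p)) * chain_sum E (W - {fst p, snd p}) None)"
proof -
  have fW: "finite W"
    using finite_subset_V[OF W(1)] .
  define B where "B v = {w \<in> W - {v}. v < w \<and> \<not> E v w \<and> removable E (W - {v}) w}" for v
  have "\<forall>v\<in>W. finite (B v)"
    using fW by (simp add: B_def)
  then have "(\<Sum>v\<in>W. monom 1 (lower_degree E W v) *
        (\<Sum>w\<in>B v. monom 1 (lower_degree E W w) * chain_sum E (W - {v, w}) None))
      = (\<Sum>(v, w)\<in>Sigma W B. monom 1 (lower_degree E W v + lower_degree E W w) * chain_sum E (W - {v, w}) None)"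
    using fW by (simp add: sum_distrib_left mult_monom sum.Sigma flip: mult.assoc)
  also have "Sigma W B = {p \<in> non_edges E W. removable E (W - {fst p}) (snd p)}"
    by (auto simp: B_def non_edges_def)
  finally have pairs: "(\<Sum>v\<in>W. monom 1 (lower_degree E W v) *
        (\<Sum>w\<in>B v. monom 1 (lower_degree E W w) * chain_sum E (W - {v, w}) None))
      = (\<Sum>p | p \<in> non_edges E W \<and> removable E (W - {fst p}) (snd p).
         monom 1 (lower_degree E W (fst p) + lower_degree E W (snd p)) * chain_sum E (W - {fst p, snd p}) None)"
    by (simp add: split_def)
  have "deletion_sum E 0 W = (\<Sum>v\<in>W. monom 1 (lower_degree E W v) * chain_sum E (W - {v}) (Some v)
       + monom 1 (lower_degree E W v) *
         (\<Sum>w\<in>B v. monom 1 (lower_degree E W w) * chain_sum E (W - {v, w}) None))"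
    using chain_sum_delete[OF W] by (simp add: deletion_sum_def B_def distrib_left)
  then show ?thesis
    unfolding sum.distrib sum_chain_sum_after_self[OF fW W(2)] pairs .
qed

lemma deletion_sum_0:
  assumes W: "W \<subseteq> V" "W \<noteq> {}"
  shows "deletion_sum E 0 W = e_coeff E 0 W + e_coeff E 1 W + (if card W = 2 then e_coeff E 1 W else 0)"
proof -
  have fW: "finite W"
    using finite_subset_V[OF W(1)] .
  define F where "F p = monom 1 (lower_degree E W (fst p) + lower_degree E W (snd p))
    * chain_sum E (W - {fst p, snd p}) None" for p
  define NC where "NC = (\<Sum>p | p \<in> non_edges E W \<and> \<not> removable E (W - {fst p}) (snd p). F p)"
  have "0 < card W"
    using fW W(2) by (simp add: card_gt_0_iff)
  then consider "card W = 1" | "2 \<le> card W"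
    by linarith
  then show ?thesis
  proof cases
    case 1
    then obtain v where "W = {v}"
      by (metis card_1_singletonE)
    moreover have "non_edges E {v} = {}"
      by (auto simp: non_edges_def)
    ultimately show ?thesis
      by (simp add: deletion_sum_def chain_sum_singleton)
  next
    case 2
    have "(\<Sum>v | v \<in> W \<and> (\<forall>u\<in>W. \<not> E v u). monom 1 (lower_degree E W v) * chain_sum E (W - {v}) (Some v))
        = NC + (if card W = 2 then e_coeff E 1 W else 0)"
    proof (cases "card W = 2")
      case True
      then show ?thesis
        unfolding NC_def sum_isolated_card2[OF True] by simp
    next
      case False
      then show ?thesis
        using sum_isolated_card_ge3[OF W(1)] 2 by (simp add: NC_def F_def)
    qed
    moreover have "e_coeff E 1 W = (\<Sum>p | p \<in> non_edges E W \<and> removable E (W - {fst p}) (snd p). F p) + NC"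
      using sum_split_filter[OF finite_non_edges[OF fW], where f = F and P = "\<lambda>p. removable E (W - {fst p}) (snd p)"]
      by (simp add: F_def NC_def)
    ultimately show ?thesis
      using deletion_sum_0_expand[OF W(1) 2] by (simp add: F_def algebra_simps)
  qed
qed

text \<open>An involution on triples (vertex \<open>v\<close>, non-edge \<open>a < b\<close>) avoiding \<open>v\<close>: if \<open>v\<close> is adjacent
  to both \<open>a\<close> and \<open>b\<close> then \<open>a < v < b\<close> and the triple is fixed; otherwise a vertex of the
  non-edge that is not adjacent to \<open>v\<close> forms the new non-edge together with \<open>v\<close>.\<close>

definition rotate_triple :: "nat \<times> nat \<times> nat \<Rightarrow> nat \<times> nat \<times> nat" where
  "rotate_triple = (\<lambda>(v, a, b).
     if E v a \<and> E v b then (v, a, b)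
     else if \<not> E v a then (b, min v a, max v a)
     else (a, min v b, max v b))"

definition triples :: "nat set \<Rightarrow> (nat \<times> nat \<times> nat) set" where
  "triples W = {(v, a, b). v \<in> W \<and> (a, b) \<in> non_edges E W \<and> v \<noteq> a \<and> v \<noteq> b}"

lemma rotate_triple_props:
  assumes W: "W \<subseteq> V" and t: "(v, a, b) \<in> triples W" and rot: "rotate_triple (v, a, b) = (v', a', b')"
  shows "(v', a', b') \<in> triples W \<and> rotate_triple (v', a', b') = (v, a, b) \<and> {v', a', b'} = {v, a, b} \<and>
    of_bool (a' < v' \<and> E a' v') + of_bool (b' < v' \<and> E b' v')
      = of_bool (v < a \<and> E v a) + (of_bool (v < b \<and> E v b) :: nat)"
proof -
  have h: "v \<in> W" "a \<in> W" "b \<in> W" "a < b" "\<not> E a b" "v \<noteq> a" "v \<noteq> b"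
    using t by (auto simp: triples_def non_edges_def)
  have hV: "v \<in> V" "a \<in> V" "b \<in> V"
    using h W by auto
  consider (both) "E v a \<and> E v b" | (not_a) "\<not> E v a" | (not_b) "E v a \<and> \<not> E v b"
    by blast
  then show ?thesis
  proof cases
    case both
    have "a < v"
      using unit_interval[of v a b] hV h both by (metis linorder_neq_iff)
    moreover have "v < b"
      using unit_interval[of a b v] hV h both sym by (metis linorder_neq_iff)
    moreover have "(v', a', b') = (v, a, b)"
      using rot both by (simp add: rotate_triple_def)
    ultimately show ?thesis
      using both t h sym by (simp add: rotate_triple_def)
  next
    case not_a
    then have "E v b"
      using no_indep_triple[of v a b] hV h by auto
    moreover have "(v', a', b') = (b, min v a, max v a)"
      using rot not_a by (simp add: rotate_triple_def)
    ultimately show ?thesis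
      using h not_a sym
      by (cases "a < v") (auto simp: rotate_triple_def triples_def non_edges_def min_def max_def)
  next
    case not_b
    then have "(v', a', b') = (a, min v b, max v b)"
      using rot by (simp add: rotate_triple_def)
    then show ?thesis
      using h not_b sym
      by (cases "b < v") (auto simp: rotate_triple_def triples_def non_edges_def min_def max_def)
  qed
qed

lemma pair_first_degree_rotate_triple:
  assumes W: "W \<subseteq> V" and t: "(v, a, b) \<in> triples W" and rot: "rotate_triple (v, a, b) = (v', a', b')"
  shows "pair_first_degree E W (v', a', b') = vertex_first_degree E W (v, a, b)"
proof -
  note props = rotate_triple_props[OF W t rot]
  have fW: "finite W"
    using finite_subset_V[OF W] .
  have d: "v \<in> W" "v \<noteq> a" "v \<noteq> b" "a \<noteq> b"
    using t by (auto simp: triples_def non_edges_def)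
  have d': "a' \<in> W" "b' \<in> W" "v' \<noteq> a'" "v' \<noteq> b'" "a' \<noteq> b'"
    using props by (auto simp: triples_def non_edges_def)
  have "lower_degree E W v' + lower_degree E W a' + lower_degree E W b'
      = lower_degree E W v + lower_degree E W a + lower_degree E W b"
    using arg_cong[of _ _ "sum (lower_degree E W)", OF props[THEN conjunct2, THEN conjunct2, THEN conjunct1]] d d'
    by (simp add: add.assoc)
  then show ?thesis
    using lower_degree_delete_vertex[OF fW d(1-3), of E] lower_degree_delete_pair[OF fW d', of E]
      props[THEN conjunct2, THEN conjunct2, THEN conjunct2]
    unfolding vertex_first_degree_def pair_first_degree_def fst_conv snd_conv by linarith
qed

lemma sum_delete_vertex_non_edge_commute:
  fixes f :: "nat set \<Rightarrow> int poly"
  assumes W: "W \<subseteq> V"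
  shows "(\<Sum>v\<in>W. monom 1 (lower_degree E W v) * (\<Sum>p\<in>non_edges E (W - {v}).
           monom 1 (lower_degree E (W - {v}) (fst p) + lower_degree E (W - {v}) (snd p))
           * f (W - {v} - {fst p, snd p})))
   = (\<Sum>p\<in>non_edges E W. monom 1 (lower_degree E W (fst p) + lower_degree E W (snd p))
       * (\<Sum>v\<in>W - {fst p, snd p}. monom 1 (lower_degree E (W - {fst p, snd p}) v)
           * f (W - {fst p, snd p} - {v})))"
proof -
  have fW: "finite W"
    using finite_subset_V[OF W] .
  define weighted where "weighted d t = monom 1 (d t) * f (W - {fst t, fst (snd t), snd (snd t)})"
    for d :: "nat \<times> nat \<times> nat \<Rightarrow> nat" and t
  have rotate: "rotate_triple (rotate_triple t) = t \<and> rotate_triple t \<in> triples W \<and>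
      weighted (pair_first_degree E W) (rotate_triple t) = weighted (vertex_first_degree E W) t"
    if t: "t \<in> triples W" for t
  proof -
    obtain v a b where vab: "t = (v, a, b)"
      by (rule prod_cases3)
    obtain v' a' b' where rot: "rotate_triple (v, a, b) = (v', a', b')"
      by (rule prod_cases3)
    note props = rotate_triple_props[OF W t[unfolded vab] rot]
    then have "{v', a', b'} = {v, a, b}"
      by blast
    then show ?thesis
      unfolding vab rot weighted_def fst_conv snd_conv
      using props pair_first_degree_rotate_triple[OF W t[unfolded vab] rot] by simp
  qed
  have diff: "W - {v} - {a, b} = W - {v, a, b}" "W - {a, b} - {v} = W - {v, a, b}" for v a b
    by auto
  have "Sigma W (\<lambda>v. non_edges E (W - {v})) = triples W"
    by (auto simp: triples_def non_edges_def)
  then have "(\<Sum>v\<in>W. monom 1 (lower_degree E W v) * (\<Sum>p\<in>non_edges E (W - {v}).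
           monom 1 (lower_degree E (W - {v}) (fst p) + lower_degree E (W - {v}) (snd p))
           * f (W - {v} - {fst p, snd p})))
      = (\<Sum>t\<in>triples W. weighted (vertex_first_degree E W) t)"
    using fW by (simp add: weighted_def vertex_first_degree_def sum_distrib_left mult_monom add.assoc
        diff sum.Sigma finite_non_edges split_def flip: mult.assoc)
  also have "\<dots> = (\<Sum>t\<in>triples W. weighted (pair_first_degree E W) t)"
    by (rule sum.reindex_bij_witness[where i = rotate_triple and j = rotate_triple]) (use rotate in auto)
  also have "triples W = (\<lambda>(p, v). (v, p)) ` Sigma (non_edges E W) (\<lambda>p. W - {fst p, snd p})"
    by (auto simp: triples_def non_edges_def image_iff)
  also have "inj_on (\<lambda>(p, v). (v, p)) (Sigma (non_edges E W) (\<lambda>p. W - {fst p, snd p}))"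
    by (auto simp: inj_on_def)
  then have "(\<Sum>t\<in>(\<lambda>(p, v). (v, p)) ` Sigma (non_edges E W) (\<lambda>p. W - {fst p, snd p}).
        weighted (pair_first_degree E W) t)
      = (\<Sum>p\<in>non_edges E W. monom 1 (lower_degree E W (fst p) + lower_degree E W (snd p))
         * (\<Sum>v\<in>W - {fst p, snd p}. monom 1 (lower_degree E (W - {fst p, snd p}) v)
           * f (W - {fst p, snd p} - {v})))"
    using fW by (simp add: sum.reindex sum.Sigma finite_non_edges split_def weighted_def
        pair_first_degree_def sum_distrib_left mult_monom diff flip: mult.assoc)
  finally show ?thesis .
qed

lemma deletion_sum_eq_of_large:
  assumes "W \<subseteq> V" "W \<noteq> {}" "2 * k + 1 \<le> card W"
  shows "deletion_sum E k W = e_coeff E k W + e_coeff E (Suc k) W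
    + (if card W = 2 * k + 2 then e_coeff E (Suc k) W else 0)"
  using assms
proof (induction k arbitrary: W)
  case 0
  then show ?case
    using deletion_sum_0 by simp
next
  case (Suc k)
  have fW: "finite W"
    using finite_subset_V[OF Suc.prems(1)] .
  define M where "M p = monom (1::int) (lower_degree E W (fst p) + lower_degree E W (snd p))" for p
  have "deletion_sum E k (W - {fst p, snd p}) = e_coeff E k (W - {fst p, snd p})
      + e_coeff E (Suc k) (W - {fst p, snd p})
      + (if card W = 2 * Suc k + 2 then e_coeff E (Suc k) (W - {fst p, snd p}) else 0)"
    if p: "p \<in> non_edges E W" for p
  proof -
    note card = card_remove_non_edge[OF fW p]
    then have "2 * k + 1 \<le> card (W - {fst p, snd p})"
      using Suc.prems(3) by simp
    moreover from this have "W - {fst p, snd p} \<noteq> {}"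
      by (intro notI) simp
    ultimately have "deletion_sum E k (W - {fst p, snd p}) = e_coeff E k (W - {fst p, snd p})
      + e_coeff E (Suc k) (W - {fst p, snd p})
      + (if card (W - {fst p, snd p}) = 2 * k + 2 then e_coeff E (Suc k) (W - {fst p, snd p}) else 0)"
      using Suc.IH[of "W - {fst p, snd p}"] Suc.prems(1) by blast
    moreover have "card (W - {fst p, snd p}) = 2 * k + 2 \<longleftrightarrow> card W = 2 * Suc k + 2"
      using card Suc.prems(3) by auto
    ultimately show ?thesis
      by (simp only:)
  qed
  then have "(\<Sum>p\<in>non_edges E W. M p * deletion_sum E k (W - {fst p, snd p}))
      = e_coeff E (Suc k) W + e_coeff E (Suc (Suc k)) W
        + (if card W = 2 * Suc k + 2 then e_coeff E (Suc (Suc k)) W else 0)"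
    by (simp add: M_def distrib_left sum.distrib)
  moreover have "deletion_sum E (Suc k) W = (\<Sum>p\<in>non_edges E W. M p * deletion_sum E k (W - {fst p, snd p}))"
    using sum_delete_vertex_non_edge_commute[OF Suc.prems(1), of "e_coeff E k"]
    by (simp add: M_def deletion_sum_def)
  ultimately show ?case
    by simp
qed

lemma deletion_sum_eq:
  assumes "W \<subseteq> V" "W \<noteq> {}"
  shows "deletion_sum E k W = e_coeff E k W + e_coeff E (Suc k) W
    + (if card W = 2 * k + 2 then e_coeff E (Suc k) W else 0) - (if card W = 2 * k then e_coeff E k W else 0)"
proof (cases "2 * k + 1 \<le> card W")
  case True
  then show ?thesis
    using deletion_sum_eq_of_large[OF assms True] by simp
next
  case False
  have fW: "finite W"
    using finite_subset_V[OF assms(1)] .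
  have "deletion_sum E k W = 0"
    using False by (intro deletion_sum_vanish[OF fW]) simp
  moreover have "e_coeff E (Suc k) W = 0"
    using False by (intro e_coeff_vanish[OF fW]) simp
  moreover have "e_coeff E k W = 0" if "card W \<noteq> 2 * k"
    using False that by (intro e_coeff_vanish[OF fW]) simp
  ultimately show ?thesis
    by auto
qed

lemma not_independent_card_ge3:
  assumes "T \<subseteq> V" "3 \<le> card T"
  shows "\<not> independent E T"
proof
  assume indep: "independent E T"
  obtain S where "S \<subseteq> T" "card S = 3"
    using assms(2) by (meson obtain_subset_with_card_n)
  then obtain x y z where "x \<in> T" "y \<in> T" "z \<in> T" "x \<noteq> y" "x \<noteq> z" "y \<noteq> z"
    by (auto simp: card_3_iff)
  then show False
    using no_indep_triple[of x y z] indep assms(1) unfolding independent_def by blast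
qed

lemma independent_card1_eq: "{T. T \<subseteq> W \<and> card T = 1 \<and> independent E T} = (\<lambda>v. {v}) ` W"
  using irrefl by (auto simp: independent_def card_1_singleton_iff)

lemma independent_card2_eq:
  "{T. T \<subseteq> W \<and> card T = 2 \<and> independent E T} = (\<lambda>p. {fst p, snd p}) ` non_edges E W"
proof (intro set_eqI iffI)
  fix T assume "T \<in> {T. T \<subseteq> W \<and> card T = 2 \<and> independent E T}"
  then obtain a b where "T = {a, b}" "a < b" "T \<subseteq> W" "independent E T"
    by (auto simp: card_2_iff) (metis insert_commute linorder_neq_iff)
  then show "T \<in> (\<lambda>p. {fst p, snd p}) ` non_edges E W"
    by (auto simp: independent_def non_edges_def intro!: image_eqI[of _ _ "(a, b)"])
next
  fix T assume "T \<in> (\<lambda>p. {fst p, snd p}) ` non_edges E W"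
  then obtain a b where "T = {a, b}" "a \<in> W" "b \<in> W" "a < b" "\<not> E a b"
    by (auto simp: non_edges_def)
  then show "T \<in> {T. T \<subseteq> W \<and> card T = 2 \<and> independent E T}"
    using sym[of a b] irrefl by (auto simp: independent_def)
qed

lemma chrom_qsf_add_top:
  assumes "W \<subseteq> V" "c \<notin># A" "\<And>x. x \<in># A \<Longrightarrow> x < c" "0 < c"
  shows "chrom_qsf W E (add_mset c A) = (\<Sum>v\<in>W. monom 1 (lower_degree E W v) * chrom_qsf (W - {v}) E A)"
  using chrom_qsf_top_color[OF finite_subset_V[OF assms(1)] assms(2-4), of E 1,
      unfolded independent_card1_eq]
  by (simp add: sum.reindex)

lemma chrom_qsf_add_top2:
  assumes "W \<subseteq> V" "c \<notin># A" "\<And>x. x \<in># A \<Longrightarrow> x < c" "0 < c"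
  shows "chrom_qsf W E (add_mset c (add_mset c A)) =
    (\<Sum>p\<in>non_edges E W. monom 1 (lower_degree E W (fst p) + lower_degree E W (snd p))
       * chrom_qsf (W - {fst p, snd p}) E A)"
proof -
  have "inj_on (\<lambda>p. {fst p, snd p}) (non_edges E W)"
    by (auto simp: inj_on_def non_edges_def doubleton_eq_iff)
  moreover have "sum (lower_degree E W) {fst p, snd p} = lower_degree E W (fst p) + lower_degree E W (snd p)"
    if "p \<in> non_edges E W" for p
    using that by (simp add: non_edges_def)
  ultimately show ?thesis
    using chrom_qsf_top_color[OF finite_subset_V[OF assms(1)] assms(2-4), of E 2,
        unfolded independent_card2_eq]
    by (simp add: numeral_2_eq_2 sum.reindex)
qed

lemma chrom_qsf_replicate_top3:
  assumes "W \<subseteq> V" "c \<notin># A" "\<And>x. x \<in># A \<Longrightarrow> x < c" "0 < c" "3 \<le> j"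
  shows "chrom_qsf W E (replicate_mset j c + A) = 0"
proof -
  have none: "{T. T \<subseteq> W \<and> card T = j \<and> independent E T} = {}"
    using not_independent_card_ge3 assms(1,5) by auto
  show ?thesis
    using chrom_qsf_top_color[OF finite_subset_V[OF assms(1)] assms(2-4), of E j]
    unfolding none by simp
qed

lemma e_expansion_add_top:
  assumes W: "W \<subseteq> V" "card W = Suc M" and c: "c \<notin># A" "\<And>x. x \<in># A \<Longrightarrow> x < c" "0 < c"
    and IH: "\<And>v. v \<in> W \<Longrightarrow>
      chrom_qsf (W - {v}) E A = (\<Sum>j\<le>M. e_coeff E j (W - {v}) * elem_sym_prod (M - j) j A)"
  shows "chrom_qsf W E (add_mset c A) = (\<Sum>k\<le>Suc M. e_coeff E k W * elem_sym_prod (Suc M - k) k (add_mset c A))"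
proof -
  have "W \<noteq> {}"
    using W(2) by auto
  have "chrom_qsf W E (add_mset c A) = (\<Sum>v\<in>W. monom 1 (lower_degree E W v) * chrom_qsf (W - {v}) E A)"
    by (rule chrom_qsf_add_top[OF W(1) c])
  also have "\<dots> = (\<Sum>v\<in>W. monom 1 (lower_degree E W v) * (\<Sum>j\<le>M. e_coeff E j (W - {v}) * elem_sym_prod (M - j) j A))"
    using IH by simp
  also have "\<dots> = (\<Sum>j\<le>M. deletion_sum E j W * elem_sym_prod (M - j) j A)"
    by (simp add: deletion_sum_def sum_distrib_left sum_distrib_right sum.swap[of _ W] mult.assoc)
  also have "\<dots> = (\<Sum>j\<le>M. (e_coeff E j W + e_coeff E (Suc j) W
      + (if Suc M = 2 * j + 2 then e_coeff E (Suc j) W else 0)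
      - (if Suc M = 2 * j then e_coeff E j W else 0)) * elem_sym_prod (M - j) j A)"
    using deletion_sum_eq[OF W(1) \<open>W \<noteq> {}\<close>] W(2) by simp
  also have "\<dots> = (\<Sum>k\<le>Suc M. e_coeff E k W * elem_sym_prod (Suc M - k) k (add_mset c A))"
    using c(3) by (intro sum_elem_sym_prod_add_top[OF c(1), symmetric]) simp
  finally show ?thesis .
qed

lemma e_expansion_add_top2:
  assumes W: "W \<subseteq> V" "card W = Suc (Suc M)" and c: "c \<notin># A" "\<And>x. x \<in># A \<Longrightarrow> x < c" "0 < c"
    and IH: "\<And>p. p \<in> non_edges E W \<Longrightarrow> chrom_qsf (W - {fst p, snd p}) E A
      = (\<Sum>j\<le>M. e_coeff E j (W - {fst p, snd p}) * elem_sym_prod (M - j) j A)"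
  shows "chrom_qsf W E (add_mset c (add_mset c A))
    = (\<Sum>k\<le>Suc (Suc M). e_coeff E k W * elem_sym_prod (Suc (Suc M) - k) k (add_mset c (add_mset c A)))"
proof -
  have "chrom_qsf W E (add_mset c (add_mset c A)) =
      (\<Sum>p\<in>non_edges E W. monom 1 (lower_degree E W (fst p) + lower_degree E W (snd p))
        * chrom_qsf (W - {fst p, snd p}) E A)"
    by (rule chrom_qsf_add_top2[OF W(1) c])
  also have "\<dots> = (\<Sum>p\<in>non_edges E W. monom 1 (lower_degree E W (fst p) + lower_degree E W (snd p))
        * (\<Sum>j\<le>M. e_coeff E j (W - {fst p, snd p}) * elem_sym_prod (M - j) j A))"
    using IH by simp
  also have "\<dots> = (\<Sum>j\<le>M. e_coeff E (Suc j) W * elem_sym_prod (M - j) j A)"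
    by (simp add: sum_distrib_left sum_distrib_right sum.swap[of _ "non_edges E W"] mult.assoc)
  also have "\<dots> = (\<Sum>k\<le>Suc (Suc M). e_coeff E k W * elem_sym_prod (Suc (Suc M) - k) k (add_mset c (add_mset c A)))"
    using c(3) by (intro sum_elem_sym_prod_add_top2[OF c(1), symmetric]) simp
  finally show ?thesis .
qed

end

lemma multiset_top_color_decomp:
  fixes \<alpha> :: "nat multiset"
  assumes "\<alpha> \<noteq> {#}" "0 \<notin># \<alpha>"
  obtains c j A where "\<alpha> = replicate_mset j c + A" "c \<notin># A" "\<And>x. x \<in># A \<Longrightarrow> x < c" "0 < c" "1 \<le> j"
proof
  let ?c = "Max (set_mset \<alpha>)"
  have "?c \<in># \<alpha>"
    using assms(1) by simp
  then show "0 < ?c" "1 \<le> count \<alpha> ?c"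
    using assms(2) by (auto simp: Suc_le_eq intro: gr0I)
  show "\<alpha> = replicate_mset (count \<alpha> ?c) ?c + filter_mset (\<lambda>x. x \<noteq> ?c) \<alpha>"
    by (auto intro: multiset_eqI)
  show "?c \<notin># filter_mset (\<lambda>x. x \<noteq> ?c) \<alpha>"
    by simp
  show "x < ?c" if "x \<in># filter_mset (\<lambda>x. x \<noteq> ?c) \<alpha>" for x
    using that by (simp add: order.not_eq_order_implies_strict)
qed

context uio_alpha2
begin

theorem chrom_qsf_e_expansion:
  assumes "W \<subseteq> V"
  shows "chrom_qsf W E \<alpha> = (\<Sum>k\<le>card W. e_coeff E k W * elem_sym_prod (card W - k) k \<alpha>)"
  using assms
proof (induction "card W" arbitrary: W \<alpha> rule: less_induct)
  case less
  have fW: "finite W"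
    using finite_subset_V[OF less.prems] .
  have IH: "chrom_qsf U E A = (\<Sum>k\<le>m. e_coeff E k U * elem_sym_prod (m - k) k A)"
    if "U \<subseteq> W" "card U = m" "m < card W" for U A m
    using less.hyps[of U A] less.prems that by auto
  consider "size \<alpha> \<noteq> card W \<or> 0 \<in># \<alpha>" | "\<alpha> = {#}" "W = {}" | "size \<alpha> = card W" "0 \<notin># \<alpha>" "\<alpha> \<noteq> {#}"
    using fW by fastforce
  then show ?case
  proof cases
    case 1
    then show ?thesis
      using fW by (auto simp: chrom_qsf_size_neq chrom_qsf_zero_color elem_sym_prod_size_neq
          elem_sym_prod_zero_color intro!: sum.neutral)
  next
    case 2
    then show ?thesis
      by (simp add: chrom_qsf_empty elem_sym_prod_empty)
  next
    case 3
    then obtain c j A where \<alpha>: "\<alpha> = replicate_mset j c + A" and c: "c \<notin># A" "\<And>x. x \<in># A \<Longrightarrow> x < c" "0 < c"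
      and "1 \<le> j"
      using multiset_top_color_decomp by metis
    have card: "card W = j + size A"
      using 3 \<alpha> by simp
    consider "j = 1" | "j = 2" | "3 \<le> j"
      using \<open>1 \<le> j\<close> by linarith
    then show ?thesis
    proof cases
      case 1
      then show ?thesis
        using e_expansion_add_top[OF less.prems _ c, of "size A"] IH card fW by (simp add: \<alpha>)
    next
      case 2
      then show ?thesis
        using e_expansion_add_top2[OF less.prems _ c, of "size A"] IH card card_remove_non_edge[OF fW]
        by (simp add: \<alpha> numeral_2_eq_2)
    next
      case 3
      then show ?thesis
        using chrom_qsf_replicate_top3[OF less.prems c 3] elem_sym_prod_replicate_ge3[OF c(1)] c(3)
        by (simp add: \<alpha>)
    qed
  qed
qed

end

section \<open>\<open>e\<close>-positivity\<close>

definition nonneg_coeffs :: "int poly \<Rightarrow> bool" where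
  "nonneg_coeffs p \<longleftrightarrow> (\<forall>i. 0 \<le> coeff p i)"

lemma nonneg_coeffs_mult: "nonneg_coeffs p \<Longrightarrow> nonneg_coeffs q \<Longrightarrow> nonneg_coeffs (p * q)"
  unfolding nonneg_coeffs_def coeff_mult by (auto intro!: sum_nonneg)

lemma nonneg_coeffs_sum: "(\<And>x. x \<in> A \<Longrightarrow> nonneg_coeffs (f x)) \<Longrightarrow> nonneg_coeffs (sum f A)"
  unfolding nonneg_coeffs_def coeff_sum by (auto intro!: sum_nonneg)

lemma nonneg_coeffs_monom_one: "nonneg_coeffs (monom 1 k)"
  by (simp add: nonneg_coeffs_def coeff_monom)

lemma nonneg_coeffs_one: "nonneg_coeffs 1"
  by (simp add: nonneg_coeffs_def coeff_1)

lemma nonneg_coeffs_chain_sum: "nonneg_coeffs (chain_sum E W x)"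
proof -
  have "nonneg_coeffs (chain_sum_fuel E n W x)" for n
    by (induction n arbitrary: W x)
      (auto intro!: nonneg_coeffs_one nonneg_coeffs_sum nonneg_coeffs_mult nonneg_coeffs_monom_one)
  then show ?thesis
    by (simp add: chain_sum_def)
qed

lemma nonneg_coeffs_e_coeff: "nonneg_coeffs (e_coeff E k W)"
  by (induction k arbitrary: W)
    (auto intro!: nonneg_coeffs_sum nonneg_coeffs_mult nonneg_coeffs_monom_one nonneg_coeffs_chain_sum)

definition two_row_partition :: "nat \<Rightarrow> nat \<Rightarrow> nat list" where
  "two_row_partition n k = filter (\<lambda>i. i \<noteq> 0) [n - k, k]"

lemma qsf_mult_one: "qsf_mult f qsf_one = f"
proof
  fix \<alpha>
  have "qsf_mult f qsf_one \<alpha> = (\<Sum>\<beta> | \<beta> \<subseteq># \<alpha>. if \<beta> = \<alpha> then f \<beta> else 0)"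
    unfolding qsf_mult_def qsf_one_def
  proof (rule sum.cong[OF refl])
    fix \<beta> assume "\<beta> \<in> {\<beta>. \<beta> \<subseteq># \<alpha>}"
    then have "\<alpha> - \<beta> + \<beta> = \<alpha>"
      by (simp add: subset_mset.diff_add)
    then have "\<alpha> - \<beta> = {#} \<longleftrightarrow> \<beta> = \<alpha>"
      by auto
    then show "f \<beta> * (if \<alpha> - \<beta> = {#} then 1 else 0) = (if \<beta> = \<alpha> then f \<beta> else 0)"
      by simp
  qed
  then show "qsf_mult f qsf_one \<alpha> = f \<alpha>"
    by (simp add: finite_submultisets)
qed

lemma elem_sym_zero: "elem_sym 0 = qsf_one"
  by (auto simp: elem_sym_def qsf_one_def)

lemma elem_sym_part_two_row_partition:
  "elem_sym_part (two_row_partition n k) = elem_sym_prod (n - k) k"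
proof -
  have "elem_sym_prod a 0 = elem_sym a" for a
    by (simp add: elem_sym_prod_def elem_sym_zero qsf_mult_one)
  moreover have "elem_sym_prod 0 b = elem_sym b" for b
    using elem_sym_prod_commute[of 0 b] calculation by auto
  ultimately show ?thesis
    by (cases "n - k = 0"; cases "k = 0")
      (simp_all add: two_row_partition_def elem_sym_part_def elem_sym_prod_def qsf_mult_one elem_sym_zero)
qed

lemma two_row_partition_partitions: "2 * k \<le> n \<Longrightarrow> two_row_partition n k \<in> partitions n"
  by (auto simp: two_row_partition_def partitions_def)

lemma finite_partitions: "finite (partitions n)"
proof (rule finite_subset)
  show "partitions n \<subseteq> {xs. set xs \<subseteq> {0..n} \<and> length xs \<le> n}"
  proof
    fix xs assume "xs \<in> partitions n"
    then have xs: "sum_list xs = n" "0 \<notin> set xs"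
      by (auto simp: partitions_def)
    moreover have "length xs \<le> sum_list xs"
      using xs(2) by (induction xs) auto
    ultimately show "xs \<in> {xs. set xs \<subseteq> {0..n} \<and> length xs \<le> n}"
      using member_le_sum_list by fastforce
  qed
  show "finite {xs. set xs \<subseteq> {0..n} \<and> length xs \<le> n}"
    by (rule finite_lists_length_le) simp
qed

lemma e_positive_two_row:
  assumes nonneg: "\<And>k. nonneg_coeffs (C k)" and vanish: "\<And>k. n < 2 * k \<Longrightarrow> C k = 0"
    and X: "\<And>\<alpha>. X \<alpha> = (\<Sum>k\<le>n. C k * elem_sym_prod (n - k) k \<alpha>)"
  shows "e_positive n X"
proof -
  let ?K = "{k. 2 * k \<le> n}"
  let ?part = "two_row_partition n"
  define D where "D lam = (\<Sum>k | 2 * k \<le> n \<and> two_row_partition n k = lam. C k)" for lam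
  have "finite ?K"
    by (rule finite_subset[of _ "{..n}"]) auto
  have D_outside: "D lam = 0" if "lam \<notin> ?part ` ?K" for lam
  proof -
    have empty: "{k. 2 * k \<le> n \<and> two_row_partition n k = lam} = {}"
      using that by auto
    show ?thesis
      unfolding D_def empty by simp
  qed
  have "X \<alpha> = (\<Sum>lam\<in>partitions n. D lam * elem_sym_part lam \<alpha>)" for \<alpha>
  proof -
    have "X \<alpha> = (\<Sum>k\<in>?K. C k * elem_sym_part (?part k) \<alpha>)"
      unfolding X elem_sym_part_two_row_partition
      by (rule sum.mono_neutral_right) (auto simp: vanish)
    also have "\<dots> = (\<Sum>lam\<in>?part ` ?K. D lam * elem_sym_part lam \<alpha>)"
      unfolding D_def sum_distrib_right
      by (subst sum.image_gen[OF \<open>finite ?K\<close>]) (auto intro!: sum.cong)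
    also have "\<dots> = (\<Sum>lam\<in>partitions n. D lam * elem_sym_part lam \<alpha>)"
      by (rule sum.mono_neutral_left) (auto simp: finite_partitions two_row_partition_partitions D_outside)
    finally show ?thesis .
  qed
  moreover have "0 \<le> coeff (D lam) i" for lam i
    using nonneg unfolding D_def nonneg_coeffs_def coeff_sum by (auto intro!: sum_nonneg)
  ultimately show ?thesis
    unfolding e_positive_def by blast
qed

lemma nuio_mono:
  assumes "nuio n m" "1 \<le> a" "a \<le> b" "b \<le> n - 1"
  shows "m a \<le> m b"
  using assms(3,4)
proof (induction b rule: dec_induct)
  case (step k)
  then show ?case
    using assms(1,2) by (auto simp: nuio_def intro: order.trans)
qed simp

lemma uio_alpha2_inc_adj:
  assumes "nuio n m"
    and cliques: "\<forall>i j. 1 \<le> i \<and> i < j \<and> j \<le> r \<longrightarrow> inc_adj m i j"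
      "\<forall>i j. r + 1 \<le> i \<and> i < j \<and> j \<le> n \<longrightarrow> inc_adj m i j"
  shows "uio_alpha2 (inc_adj m) {1..n}"
proof
  show "inc_adj m a b = inc_adj m b a" "\<not> inc_adj m a a" for a b
    by (auto simp: inc_adj_def)
next
  fix a b c assume abc: "a \<in> {1..n}" "b \<in> {1..n}" "c \<in> {1..n}" "a < b" "b < c" "inc_adj m a c"
  then have "c \<le> m a"
    by (auto simp: inc_adj_def)
  moreover have "m a \<le> m b"
    using nuio_mono[OF assms(1), of a b] abc by auto
  ultimately show "inc_adj m a b \<and> inc_adj m b c"
    using abc by (auto simp: inc_adj_def)
next
  fix a b c assume abc: "a \<in> {1..n}" "b \<in> {1..n}" "c \<in> {1..n}" "a \<noteq> b" "a \<noteq> c" "b \<noteq> c"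
  \<comment> \<open>two of any three vertices lie in the same clique\<close>
  have "inc_adj m x y" if "x \<in> {1..n}" "y \<in> {1..n}" "x \<noteq> y" "x \<le> r \<longleftrightarrow> y \<le> r" for x y
    using that cliques[rule_format, of x y] cliques[rule_format, of y x]
    by (cases "x < y") (auto simp: inc_adj_def)
  then show "inc_adj m a b \<or> inc_adj m a c \<or> inc_adj m b c"
    using abc by blast
qed (simp)

theorem corollary3p5:
  fixes n r :: nat and m :: "nat \<Rightarrow> nat"
  assumes "nuio n m"
    and "r \<le> n"
    and "\<forall>i j. 1 \<le> i \<and> i < j \<and> j \<le> r \<longrightarrow> inc_adj m i j"
    and "\<forall>i j. r + 1 \<le> i \<and> i < j \<and> j \<le> n \<longrightarrow> inc_adj m i j"
  shows "e_positive n (chrom_qsf {1..n} (inc_adj m))"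
proof -
  interpret uio_alpha2 "inc_adj m" "{1..n}"
    using uio_alpha2_inc_adj[OF assms(1,3,4)] .
  show ?thesis
    using chrom_qsf_e_expansion[of "{1..n}"]
    by (intro e_positive_two_row[where C = "\<lambda>k. e_coeff (inc_adj m) k {1..n}"])
      (auto simp: nonneg_coeffs_e_coeff e_coeff_vanish)
qed

end
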